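(* Consider the $L$-layer LSTM described in the context and let $k\in\mathbb{Z}_{\ge0}$. Suppose that $\rho(A^{(l)}_s(k))<1$ for all $l\in[L]$. Then the LSTM is incrementally input-to-state stable on initial states in $\prod_{l=1}^L\mathcal{S}^{(l)}(k)$: there exist continuous $\beta\in\mathcal{KL}$ and $\gamma\in\mathcal{K}_\infty$ such that for all initial states $s_1(0),s_2(0)$ with $s^{(l)}_1(0),s^{(l)}_2(0)\in\mathcal{S}^{(l)}(k)$ for every $l\in[L]$, all input sequences $x_1(0:t),x_2(0:t)\in[-x_{\max},x_{\max}]^{n_x\times(t+1)}$, and all $t\in\mathbb{Z}_{\ge0}$, $\|s_1(t)-s_2(t)\|\le\beta(\|s_1(0)-s_2(0)\|,t)+\gamma(\|x_1(0:t)-x_2(0:t)\|_{2,\infty})$, where $s_i(t)$ is the state generated from $s_i(0)$ with input $x_i$. Furthermore, $\rho(A^{(l)}_s(k+1))\le\rho(A^{(l)}_s(k))$ for all $k\in\mathbb{Z}_{\ge0}$ and $l\in[L]$.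
   Context: LSTM: fix $L\in\mathbb{N}$, dimensions $n_x,n_c$, and $x_{\max}>0$. For $l\in[L]$ let $n^{(l)}=n_x$ if $l=1$, $n^{(l)}=n_c$ if $l\ge2$; weights $W^{(l)}_*\in\mathbb{R}^{n_c\times n^{(l)}}$, $U^{(l)}_*\in\mathbb{R}^{n_c\times n_c}$, biases $b^{(l)}_*\in\mathbb{R}^{n_c}$, $*\in\{f,i,c,o\}$. With $\sigma(w)=1/(1+e^{-w})$, $\phi=\tanh$ (componentwise), $\odot$ componentwise product, for $t\in\mathbb{Z}_{\ge0}$: $c^{(l)}(t+1)=\sigma(W^{(l)}_f x^{(l)}(t)+U^{(l)}_f h^{(l)}(t)+b^{(l)}_f)\odot c^{(l)}(t)+\sigma(W^{(l)}_i x^{(l)}(t)+U^{(l)}_i h^{(l)}(t)+b^{(l)}_i)\odot\phi(W^{(l)}_c x^{(l)}(t)+U^{(l)}_c h^{(l)}(t)+b^{(l)}_c)$, $h^{(l)}(t+1)=\sigma(W^{(l)}_o x^{(l)}(t)+U^{(l)}_o h^{(l)}(t)+b^{(l)}_o)\odot\phi(c^{(l)}(t+1))$, with $x^{(1)}(t)=x(t)\in[-x_{\max},x_{\max}]^{n_x}$, $x^{(l)}(t)=h^{(l-1)}(t+1)$ for $l\ge2$. The state is $s(t)=(s^{(1)}(t),\dots,s^{(L)}(t))$ with $s^{(l)}(t)=(c^{(l)}(t),h^{(l)}(t))$. Quantities: $x^{(l)}_{\max}=x_{\max}$ if $l=1$, $=1$ if $l\ge2$; $|A|$ entrywise absolute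 value; $\mathbf{1}_n$ all-ones vector; $v_+$ componentwise positive part; $\|\cdot\|_\infty$ max norm. For $\eta\ge0$, $*\in\{f,i,o\}$: $G^{(l)}_*(\eta)=\|(x^{(l)}_{\max}|W^{(l)}_*|\mathbf{1}_{n^{(l)}}+\eta|U^{(l)}_*|\mathbf{1}_{n_c}+b^{(l)}_* )_+\|_\infty$, $G^{(l)}_c(\eta)=\|x^{(l)}_{\max}|W^{(l)}_c|\mathbf{1}_{n^{(l)}}+\eta|U^{(l)}_c|\mathbf{1}_{n_c}+|b^{(l)}_c|\|_\infty$. With $\eta^{(l)}(-1)=1$ and $k\ge0$: $\overline{\sigma}^{(l)}_*(k)=\sigma(G^{(l)}_*(\eta^{(l)}(k-1)))$, $\overline{\phi}^{(l)}_c(k)=\phi(G^{(l)}_c(\eta^{(l)}(k-1)))$, $\overline{c}^{(l)}(k)=\overline{\sigma}^{(l)}_i(k)\overline{\phi}^{(l)}_c(k)/(1-\overline{\sigma}^{(l)}_f(k))$, $\eta^{(l)}(k)=\phi(\overline{c}^{(l)}(k))\overline{\sigma}^{(l)}_o(k)$. $\mathcal{S}^{(l)}(k)=\{(c,h)\in\mathbb{R}^{n_c}\times\mathbb{R}^{n_c}:\|c\|_\infty\le\overline{c}^{(l)}(k),\ \|h\|_\infty\le\phi(\overline{c}^{(l)}(k))\overline{\sigma}^{(l)}_o(k)\}$. Matrix: with $\|\cdot\|$ the Euclidean norm / induced 2-norm, $\alpha^{(l)}_s(k)=\tfrac14\|U^{(l)}_f\|\overline{c}^{(l)}(k)+\overline{\sigma}^{(l)}_i(k)\|U^{(l)}_c\|+\tfrac14\|U^{(l)}_i\|\overline{\phi}^{(l)}_c(k)$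 and $A^{(l)}_s(k)=\begin{bmatrix}\overline{\sigma}^{(l)}_f(k)&\alpha^{(l)}_s(k)\\ \overline{\sigma}^{(l)}_o(k)\overline{\sigma}^{(l)}_f(k)&\alpha^{(l)}_s(k)\overline{\sigma}^{(l)}_o(k)+\tfrac14\phi(\overline{c}^{(l)}(k))\|U^{(l)}_o\|\end{bmatrix}$; $\rho$ denotes spectral radius. Notation: $\|v(0:t)\|_{2,\infty}=\max_{0\le\tau\le t}\|v(\tau)\|_2$. A function $\alpha:\mathbb{R}_{\ge0}\to\mathbb{R}_{\ge0}$ is class $\mathcal{K}$ if continuous, strictly increasing, $\alpha(0)=0$; class $\mathcal{K}_\infty$ if moreover unbounded; $\beta$ is class $\mathcal{KL}$ if $\beta(\cdot,t)\in\mathcal{K}$ for each $t$ and $\beta(s,\cdot)$ is decreasing with $\beta(s,t)\to0$ as $t\to\infty$. *)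

theory Defs
  imports "HOL-Analysis.Analysis"
begin

datatype gate = GF | GI | GC | GO

definition sigm :: "real \<Rightarrow> real" where
  "sigm w = 1 / (1 + exp (- w))"

definition vsig :: "real^'n \<Rightarrow> real^'n" where
  "vsig v = (\<chi> i. sigm (v $ i))"

definition vtanh :: "real^'n \<Rightarrow> real^'n" where
  "vtanh v = (\<chi> i. tanh (v $ i))"

definition hadamard :: "real^'n \<Rightarrow> real^'n \<Rightarrow> real^'n" where
  "hadamard u v = (\<chi> i. u $ i * v $ i)"

text \<open>One LSTM cell update. \<open>wx g\<close> is the input contribution \<open>W_g x\<close>;
  the state is the pair (c, h).\<close>
definition cell_step ::
  "(gate \<Rightarrow> real^'c) \<Rightarrow> (gate \<Rightarrow> real^'c^'c) \<Rightarrow> (gate \<Rightarrow> real^'c)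
   \<Rightarrow> (real^'c) \<times> (real^'c) \<Rightarrow> (real^'c) \<times> (real^'c)" where
  "cell_step wx U b s =
    (let c = fst s; h = snd s;
         z = (\<lambda>g. wx g + U g *v h + b g);
         c' = hadamard (vsig (z GF)) c + hadamard (vsig (z GI)) (vtanh (z GC))
     in (c', hadamard (vsig (z GO)) (vtanh c')))"

text \<open>Trajectory of the L-layer LSTM: \<open>lstm_traj Wx Wh U b x s0 t l\<close> is
  \<open>s^(l)(t)\<close>.
  Layer index 0 is unused (junk).\<close>
fun lstm_traj ::
  "(gate \<Rightarrow> real^'x^'c) \<Rightarrow> (nat \<Rightarrow> gate \<Rightarrow> real^'c^'c) \<Rightarrow> (nat \<Rightarrow> gate \<Rightarrow> real^'c^'c)
   \<Rightarrow> (nat \<Rightarrow> gate \<Rightarrow> real^'c) \<Rightarrow> (nat \<Rightarrow> real^'x) \<Rightarrow> (nat \<Rightarrow> (real^'c) \<times> (real^'c))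
   \<Rightarrow> nat \<Rightarrow> nat \<Rightarrow> (real^'c) \<times> (real^'c)" where
  "lstm_traj Wx Wh U b x s0 0 l = s0 l"
| "lstm_traj Wx Wh U b x s0 (Suc t) 0 = s0 0"
| "lstm_traj Wx Wh U b x s0 (Suc t) (Suc 0) =
     cell_step (\<lambda>g. Wx g *v x t) (U 1) (b 1) (lstm_traj Wx Wh U b x s0 t 1)"
| "lstm_traj Wx Wh U b x s0 (Suc t) (Suc (Suc l)) =
     cell_step (\<lambda>g. Wh (Suc (Suc l)) g *v snd (lstm_traj Wx Wh U b x s0 (Suc t) (Suc l)))
       (U (Suc (Suc l))) (b (Suc (Suc l))) (lstm_traj Wx Wh U b x s0 t (Suc (Suc l)))"

definition vinf :: "real^'n \<Rightarrow> real" where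
  "vinf v = Max (range (\<lambda>i. \<bar>v $ i\<bar>))"

definition rowabs :: "real^'m^'n \<Rightarrow> real^'n" where
  "rowabs W = (\<chi> i. \<Sum>j\<in>UNIV. \<bar>W $ i $ j\<bar>)"

definition vabs :: "real^'n \<Rightarrow> real^'n" where
  "vabs v = (\<chi> i. \<bar>v $ i\<bar>)"

definition vpos :: "real^'n \<Rightarrow> real^'n" where
  "vpos v = (\<chi> i. max (v $ i) 0)"

definition Gfun ::
  "real \<Rightarrow> (gate \<Rightarrow> real^'x^'c) \<Rightarrow> (nat \<Rightarrow> gate \<Rightarrow> real^'c^'c) \<Rightarrow> (nat \<Rightarrow> gate \<Rightarrow> real^'c^'c)
   \<Rightarrow> (nat \<Rightarrow> gate \<Rightarrow> real^'c) \<Rightarrow> nat \<Rightarrow> gate \<Rightarrow> real \<Rightarrow> real" where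
  "Gfun xmax Wx Wh U b l g \<eta> =
    (let xm = (if l = 1 then xmax else 1);
         win = (if l = 1 then rowabs (Wx g) else rowabs (Wh l g));
         v = xm *\<^sub>R win + \<eta> *\<^sub>R rowabs (U l g)
     in if g = GC then vinf (v + vabs (b l g)) else vinf (vpos (v + b l g)))"

text \<open>\<open>eta_prev ... l k = \<eta>^(l)(k-1)\<close>, with \<open>\<eta>^(l)(-1) = 1\<close>.\<close>
fun eta_prev ::
  "real \<Rightarrow> (gate \<Rightarrow> real^'x^'c) \<Rightarrow> (nat \<Rightarrow> gate \<Rightarrow> real^'c^'c) \<Rightarrow> (nat \<Rightarrow> gate \<Rightarrow> real^'c^'c)
   \<Rightarrow> (nat \<Rightarrow> gate \<Rightarrow> real^'c) \<Rightarrow> nat \<Rightarrow> nat \<Rightarrow> real" where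
  "eta_prev xmax Wx Wh U b l 0 = 1"
| "eta_prev xmax Wx Wh U b l (Suc k) =
    (let G = Gfun xmax Wx Wh U b l; e = eta_prev xmax Wx Wh U b l k;
         cb = sigm (G GI e) * tanh (G GC e) / (1 - sigm (G GF e))
     in tanh cb * sigm (G GO e))"

definition sigbar where
  "sigbar xmax Wx Wh U b l g k = sigm (Gfun xmax Wx Wh U b l g (eta_prev xmax Wx Wh U b l k))"

definition phibar where
  "phibar xmax Wx Wh U b l k = tanh (Gfun xmax Wx Wh U b l GC (eta_prev xmax Wx Wh U b l k))"

definition cbar where
  "cbar xmax Wx Wh U b l k =
     sigbar xmax Wx Wh U b l GI k * phibar xmax Wx Wh U b l k / (1 - sigbar xmax Wx Wh U b l GF k)"

definition eta where
  "eta xmax Wx Wh U b l k = tanh (cbar xmax Wx Wh U b l k) * sigbar xmax Wx Wh U b l GO k"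

definition Sset ::
  "real \<Rightarrow> (gate \<Rightarrow> real^'x^'c) \<Rightarrow> (nat \<Rightarrow> gate \<Rightarrow> real^'c^'c) \<Rightarrow> (nat \<Rightarrow> gate \<Rightarrow> real^'c^'c)
   \<Rightarrow> (nat \<Rightarrow> gate \<Rightarrow> real^'c) \<Rightarrow> nat \<Rightarrow> nat \<Rightarrow> ((real^'c) \<times> (real^'c)) set" where
  "Sset xmax Wx Wh U b l k =
    {(c, h). vinf c \<le> cbar xmax Wx Wh U b l k \<and>
             vinf h \<le> tanh (cbar xmax Wx Wh U b l k) * sigbar xmax Wx Wh U b l GO k}"

definition opnorm2 :: "real^'n^'m \<Rightarrow> real" where
  "opnorm2 A = onorm (\<lambda>v. A *v v)"

definition alpha_s where
  "alpha_s xmax Wx Wh U b l k =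
     1/4 * opnorm2 (U l GF) * cbar xmax Wx Wh U b l k
     + sigbar xmax Wx Wh U b l GI k * opnorm2 (U l GC)
     + 1/4 * opnorm2 (U l GI) * phibar xmax Wx Wh U b l k"

definition A_s ::
  "real \<Rightarrow> (gate \<Rightarrow> real^'x^'c) \<Rightarrow> (nat \<Rightarrow> gate \<Rightarrow> real^'c^'c) \<Rightarrow> (nat \<Rightarrow> gate \<Rightarrow> real^'c^'c)
   \<Rightarrow> (nat \<Rightarrow> gate \<Rightarrow> real^'c) \<Rightarrow> nat \<Rightarrow> nat \<Rightarrow> real^2^2" where
  "A_s xmax Wx Wh U b l k =
    (let sf = sigbar xmax Wx Wh U b l GF k; so = sigbar xmax Wx Wh U b l GO k;
         a = alpha_s xmax Wx Wh U b l k
     in vector [vector [sf, a],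
                vector [so * sf, a * so + 1/4 * tanh (cbar xmax Wx Wh U b l k) * opnorm2 (U l GO)]])"

text \<open>Spectral radius of a real 2x2 matrix: the maximum modulus of its
  (complex) eigenvalues, i.e. of the roots of its characteristic polynomial
  \<open>det(z I - A) = z^2 - tr A z + det A\<close>.\<close>
definition spectral_radius2 :: "real^2^2 \<Rightarrow> real" where
  "spectral_radius2 A =
    Max {cmod z | z. z^2 - complex_of_real (A$1$1 + A$2$2) * z
                      + complex_of_real (A$1$1 * A$2$2 - A$1$2 * A$2$1) = 0}"

definition class_K :: "(real \<Rightarrow> real) \<Rightarrow> bool" where
  "class_K \<alpha> \<longleftrightarrow> continuous_on {0..} \<alpha> \<and> strict_mono_on {0..} \<alpha> \<and> \<alpha> 0 = 0
                  \<and> (\<forall>s\<ge>0. \<alpha> s \<ge> 0)"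

definition class_Kinf :: "(real \<Rightarrow> real) \<Rightarrow> bool" where
  "class_Kinf \<alpha> \<longleftrightarrow> class_K \<alpha> \<and> (\<forall>M. \<exists>s\<ge>0. \<alpha> s > M)"

definition class_KL :: "(real \<Rightarrow> nat \<Rightarrow> real) \<Rightarrow> bool" where
  "class_KL \<beta> \<longleftrightarrow> (\<forall>t. class_K (\<lambda>s. \<beta> s t)) \<and>
     (\<forall>s\<ge>0. antimono (\<beta> s) \<and> (\<beta> s \<longlonglongrightarrow> 0))"

definition state_dist :: "nat \<Rightarrow> (nat \<Rightarrow> (real^'c) \<times> (real^'c)) \<Rightarrow> (nat \<Rightarrow> (real^'c) \<times> (real^'c)) \<Rightarrow> real" where
  "state_dist L s1 s2 = sqrt (\<Sum>l\<in>{1..L}. (norm (s1 l - s2 l))^2)"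

definition input_dist :: "nat \<Rightarrow> (nat \<Rightarrow> real^'x) \<Rightarrow> (nat \<Rightarrow> real^'x) \<Rightarrow> real" where
  "input_dist t x1 x2 = Max ((\<lambda>\<tau>. norm (x1 \<tau> - x2 \<tau>)) ` {0..t})"

end

(*
  On the box S^(l)(k) every gate pre-activation of layer l is bounded by G^(l)_*(eta^(l)(k-1)),
  and the box is forward invariant. Since sigma and tanh are 1/4- and 1-Lipschitz, the increments
  (|Delta c|, |Delta h|) between two trajectories of layer l are bounded, one step ahead, by
  A_s^(l)(k) applied to the current increments plus a multiple of the increment of the layer input.
  A nonnegative 2x2 matrix of spectral radius below 1 has positive weights p with
  p^T A <= lambda p^T for some lambda < 1, so p_1 |Delta c| + p_2 |Delta h| contracts by lambda up
  to the input term. Layer l is driven by layer l-1 at the same time step; weighting layer l by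
  eps^l with eps small absorbs this coupling, so the weighted sum over all layers contracts
  geometrically, which yields an exponential KL bound and a linear gain.

  For the second claim: eta^(l)(k) is the orbit of a monotone map started below eta^(l)(-1) = 1,
  hence decreasing in k; every entry of A_s^(l)(k) increases with eta^(l)(k-1); and the spectral
  radius of a nonnegative 2x2 matrix is monotone in its entries.
*)

theory Submission
  imports Defs
begin

section \<open>Activation functions and the maximum norm\<close>

lemma sigm_eq_tanh: "sigm x = (1 + tanh (x / 2)) / 2"
proof -
  have "tanh (x / 2) = (1 - exp (- x)) / (1 + exp (- x))"
    by (simp add: tanh_real_altdef)
  moreover have "1 + exp (- x) > 0"
    by (simp add: add_pos_pos)
  ultimately show ?thesis
    unfolding sigm_def by (simp add: field_simps)
qed

lemma sigm_pos: "0 < sigm x" and sigm_less_1: "sigm x < 1"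
  using tanh_real_bounds[of "x / 2"] by (auto simp: sigm_eq_tanh)

lemma sigm_mono: "x \<le> y \<Longrightarrow> sigm x \<le> sigm y"
  by (simp add: sigm_eq_tanh)

lemma tanh_real_lipschitz: "\<bar>tanh x - tanh y\<bar> \<le> \<bar>x - y\<bar>" for x y :: real
proof -
  have "tanh y - tanh x \<le> y - x" if "x < y" for x y :: real
  proof -
    have "\<exists>z. x < z \<and> z < y \<and> tanh y - tanh x = (y - x) * (1 - tanh z ^ 2)"
      by (rule MVT2[OF \<open>x < y\<close>]) (auto intro!: derivative_eq_intros)
    then obtain z where "tanh y - tanh x = (y - x) * (1 - tanh z ^ 2)"
      by blast
    moreover have "(y - x) * (1 - tanh z ^ 2) \<le> (y - x) * 1"
      using \<open>x < y\<close> by (intro mult_left_mono) auto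
    ultimately show ?thesis by simp
  qed
  then show ?thesis
    by (cases x y rule: linorder_cases)
       (use tanh_real_less_iff[of x y] tanh_real_less_iff[of y x] in \<open>auto simp: abs_if\<close>)
qed

lemma sigm_lipschitz: "\<bar>sigm x - sigm y\<bar> \<le> \<bar>x - y\<bar> / 4"
proof -
  have "\<bar>sigm x - sigm y\<bar> = \<bar>tanh (x / 2) - tanh (y / 2)\<bar> / 2"
    by (simp add: sigm_eq_tanh diff_divide_distrib[symmetric])
  also have "\<dots> \<le> \<bar>x / 2 - y / 2\<bar> / 2"
    by (intro divide_right_mono tanh_real_lipschitz) simp
  finally show ?thesis
    by simp
qed

lemma abs_le_vinf: "\<bar>v $ i\<bar> \<le> vinf v"
  unfolding vinf_def by (rule Max_ge) auto

lemma vinf_le_iff: "vinf v \<le> M \<longleftrightarrow> (\<forall>i. \<bar>v $ i\<bar> \<le> M)"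
  unfolding vinf_def by (subst Max_le_iff) auto

lemma vinf_nonneg: "0 \<le> vinf v"
  using abs_le_vinf[of v] abs_ge_zero order_trans by blast

lemma vinf_mono: "(\<And>i. \<bar>u $ i\<bar> \<le> \<bar>v $ i\<bar>) \<Longrightarrow> vinf u \<le> vinf v"
  by (meson abs_le_vinf order_trans vinf_le_iff)

lemma norm_hadamard_le:
  assumes "\<And>i. \<bar>u $ i\<bar> \<le> M" and "norm v \<le> D"
  shows "norm (hadamard u v) \<le> M * D"
proof -
  have "0 \<le> M"
    using assms(1)[of undefined] by linarith
  have "norm (hadamard u v) \<le> norm (M *\<^sub>R v)"
    by (rule norm_le_componentwise_cart)
       (auto simp: hadamard_def abs_mult \<open>0 \<le> M\<close> intro!: mult_right_mono assms(1))
  also have "\<dots> \<le> M * D"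
    using \<open>0 \<le> M\<close> assms(2) by (simp add: mult_left_mono)
  finally show ?thesis .
qed

lemma norm_vsig_diff_le: "norm (vsig u - vsig v) \<le> norm (u - v) / 4"
proof -
  have "norm (vsig u - vsig v) \<le> norm ((1 / 4 :: real) *\<^sub>R (u - v))"
    by (rule norm_le_componentwise_cart) (use sigm_lipschitz in \<open>simp add: vsig_def\<close>)
  then show ?thesis
    by simp
qed

lemma norm_vtanh_diff_le: "norm (vtanh u - vtanh v) \<le> norm (u - v)"
  by (rule norm_le_componentwise_cart) (simp add: vtanh_def tanh_real_lipschitz)

lemma opnorm2_nonneg: "0 \<le> opnorm2 A"
  unfolding opnorm2_def by (rule onorm_pos_le) simp

lemma norm_mult_le_opnorm2: "norm (A *v x) \<le> opnorm2 A * norm x"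
  unfolding opnorm2_def by (rule onorm) simp

lemma rowabs_nonneg: "0 \<le> rowabs W $ i"
  by (simp add: rowabs_def sum_nonneg)

lemma abs_mult_vec_le_rowabs:
  assumes "\<And>j. \<bar>x $ j\<bar> \<le> m"
  shows "\<bar>(W *v x) $ i\<bar> \<le> m * rowabs W $ i"
proof -
  have "\<bar>(W *v x) $ i\<bar> \<le> (\<Sum>j\<in>UNIV. \<bar>W $ i $ j\<bar> * \<bar>x $ j\<bar>)"
    by (simp add: matrix_vector_mult_def abs_mult[symmetric] sum_abs)
  also have "\<dots> \<le> (\<Sum>j\<in>UNIV. \<bar>W $ i $ j\<bar> * m)"
    by (intro sum_mono mult_left_mono assms) simp
  finally show ?thesis
    by (simp add: rowabs_def sum_distrib_left mult.commute)
qed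

section \<open>Nonnegative 2x2 matrices\<close>

lemma spectral_radius2_nonneg_eq:
  fixes A :: "real^2^2"
  assumes "\<forall>i j. 0 \<le> A$i$j"
  shows "spectral_radius2 A =
    (A$1$1 + A$2$2 + sqrt ((A$1$1 - A$2$2)^2 + 4 * (A$1$2 * A$2$1))) / 2"
proof -
  define a d bc where "a = A$1$1" and "d = A$2$2" and "bc = A$1$2 * A$2$1"
  define q where "q = sqrt ((a - d)^2 + 4 * bc)"
  have "0 \<le> a + d" "0 \<le> bc"
    using assms by (simp_all add: a_def d_def bc_def)
  then have "0 \<le> q" and q_sq: "q^2 = (a - d)^2 + 4 * bc"
    by (simp_all add: q_def)
  define r1 r2 where "r1 = (a + d + q) / 2" and "r2 = (a + d - q) / 2"
  have r12: "r1 + r2 = a + d" "r1 * r2 = a * d - bc"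
    using q_sq by (simp_all add: r1_def r2_def field_simps power2_eq_square)
  have roots: "z^2 - complex_of_real (a + d) * z + complex_of_real (a * d - bc)
      = (z - complex_of_real r1) * (z - complex_of_real r2)" for z
    by (simp add: r12[symmetric] algebra_simps power2_eq_square)
  have "{cmod z | z. z^2 - complex_of_real (a + d) * z + complex_of_real (a * d - bc) = 0}
      = {\<bar>r1\<bar>, \<bar>r2\<bar>}"
    unfolding roots by (auto simp del: of_real_diff) (metis norm_of_real)+
  moreover have "\<bar>r2\<bar> \<le> r1" "0 \<le> r1"
    using \<open>0 \<le> q\<close> \<open>0 \<le> a + d\<close> by (simp_all add: r1_def r2_def abs_le_iff)
  then have "Max {\<bar>r1\<bar>, \<bar>r2\<bar>} = r1"
    by (simp add: max_def)
  ultimately show ?thesis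
    by (simp add: spectral_radius2_def a_def d_def bc_def r1_def q_def)
qed

lemma largest_root_le_iff:
  fixes a d p s :: real
  assumes "0 \<le> p"
  shows "(a + d + sqrt ((a - d)^2 + 4 * p)) / 2 \<le> s \<longleftrightarrow>
    a \<le> s \<and> d \<le> s \<and> p \<le> (s - a) * (s - d)"
proof -
  have gap: "(2 * s - a - d)^2 - ((a - d)^2 + 4 * p) = 4 * ((s - a) * (s - d) - p)"
    by (simp add: power2_eq_square algebra_simps)
  have "\<bar>a - d\<bar> \<le> sqrt ((a - d)^2 + 4 * p)"
    using assms by (intro real_le_rsqrt) simp
  moreover have "sqrt ((a - d)^2 + 4 * p) \<le> 2 * s - a - d \<Longrightarrow> (a - d)^2 + 4 * p \<le> (2 * s - a - d)^2"
    by (rule sqrt_le_D)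
  moreover have "a \<le> s \<Longrightarrow> d \<le> s \<Longrightarrow> (a - d)^2 + 4 * p \<le> (2 * s - a - d)^2
      \<Longrightarrow> sqrt ((a - d)^2 + 4 * p) \<le> 2 * s - a - d"
    by (intro real_le_lsqrt) auto
  ultimately show ?thesis
    using gap by (auto simp: abs_le_iff)
qed

lemma spectral_radius2_le_iff:
  fixes A :: "real^2^2"
  assumes "\<forall>i j. 0 \<le> A$i$j"
  shows "spectral_radius2 A \<le> s \<longleftrightarrow>
    A$1$1 \<le> s \<and> A$2$2 \<le> s \<and> A$1$2 * A$2$1 \<le> (s - A$1$1) * (s - A$2$2)"
  unfolding spectral_radius2_nonneg_eq[OF assms] using assms by (intro largest_root_le_iff) simp

lemma spectral_radius2_mono:
  fixes A B :: "real^2^2"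
  assumes A: "\<forall>i j. 0 \<le> A$i$j" and AB: "\<forall>i j. A$i$j \<le> B$i$j"
  shows "spectral_radius2 A \<le> spectral_radius2 B"
proof -
  define s where "s = spectral_radius2 B"
  have B: "\<forall>i j. 0 \<le> B$i$j"
    using A AB order_trans by blast
  have s: "B$1$1 \<le> s" "B$2$2 \<le> s" "B$1$2 * B$2$1 \<le> (s - B$1$1) * (s - B$2$2)"
    using spectral_radius2_le_iff[OF B, of s] by (simp_all add: s_def)
  have diag: "A$1$1 \<le> s" "A$2$2 \<le> s"
    using AB s order_trans by blast+
  have "A$1$2 * A$2$1 \<le> B$1$2 * B$2$1"
    using A AB B by (intro mult_mono) auto
  also have "\<dots> \<le> (s - B$1$1) * (s - B$2$2)"
    by (rule s(3))
  also have "\<dots> \<le> (s - A$1$1) * (s - A$2$2)"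
    using AB s diag by (intro mult_mono) auto
  finally show ?thesis
    using diag spectral_radius2_le_iff[OF A, of s] by (simp add: s_def)
qed

lemma spectral_radius2_lt_1_imp_contractive_weights:
  fixes A :: "real^2^2"
  assumes A: "\<forall>i j. 0 \<le> A$i$j" and rho: "spectral_radius2 A < 1"
  obtains p1 p2 lam where "1 \<le> p1" "1 \<le> p2" "lam < 1"
    "p1 * A$1$1 + p2 * A$2$1 \<le> lam * p1" "p1 * A$1$2 + p2 * A$2$2 \<le> lam * p2"
proof -
  define a b c d where "a = A$1$1" and "b = A$1$2" and "c = A$2$1" and "d = A$2$2"
  define r where "r = spectral_radius2 A"
  define D where "D = (1 - a) * (1 - d) - b * c"
  have "a \<le> r" "d \<le> r" "b * c \<le> (r - a) * (r - d)" and nonneg: "0 \<le> b" "0 \<le> c"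
    using spectral_radius2_le_iff[OF A, of r] A by (simp_all add: a_def b_def c_def d_def r_def)
  moreover have "(r - a) * (r - d) < (1 - a) * (1 - d)"
    using \<open>a \<le> r\<close> \<open>d \<le> r\<close> rho by (intro mult_strict_mono) (auto simp: r_def)
  ultimately have "a < 1" "d < 1" and "0 < D"
    using rho by (simp_all add: r_def D_def)
  \<comment> \<open>\<open>q = (q1, q2)\<close> satisfies \<open>q^T A = q^T - D (1, 1)\<close> with \<open>D = det (I - A) > 0\<close>\<close>
  define q1 q2 where "q1 = 1 - d + c" and "q2 = 1 - a + b"
  define m P where "m = min q1 q2" and "P = max q1 q2"
  have "0 < m" "m \<le> q1" "m \<le> q2" "q1 \<le> P" "q2 \<le> P"
    using \<open>a < 1\<close> \<open>d < 1\<close> nonneg by (auto simp: m_def P_def q1_def q2_def)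
  have contract: "q - D \<le> (1 - D / P) * q" if "0 < q" "q \<le> P" for q
  proof -
    have "D * (q / P) \<le> D"
      using that \<open>0 < D\<close> by (intro mult_left_le) auto
    then show ?thesis
      by (simp add: algebra_simps)
  qed
  show thesis
  proof (rule that[of "q1 / m" "q2 / m" "1 - D / P"])
    show "1 \<le> q1 / m" "1 \<le> q2 / m" "1 - D / P < 1"
      using \<open>0 < m\<close> \<open>m \<le> q1\<close> \<open>m \<le> q2\<close> \<open>q1 \<le> P\<close> \<open>0 < D\<close> by simp_all
    have "q1 * A$1$1 + q2 * A$2$1 \<le> (1 - D / P) * q1"
      and "q1 * A$1$2 + q2 * A$2$2 \<le> (1 - D / P) * q2"
      using contract[of q1] contract[of q2] \<open>0 < m\<close> \<open>m \<le> q1\<close> \<open>m \<le> q2\<close>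
        \<open>q1 \<le> P\<close> \<open>q2 \<le> P\<close>
      by (simp_all add: a_def b_def c_def d_def q1_def q2_def D_def algebra_simps)
    then have "(q1 * A$1$1 + q2 * A$2$1) / m \<le> (1 - D / P) * q1 / m"
      and "(q1 * A$1$2 + q2 * A$2$2) / m \<le> (1 - D / P) * q2 / m"
      using \<open>0 < m\<close> by (simp_all add: divide_right_mono)
    then show "q1 / m * A$1$1 + q2 / m * A$2$1 \<le> (1 - D / P) * (q1 / m)"
      and "q1 / m * A$1$2 + q2 / m * A$2$2 \<le> (1 - D / P) * (q2 / m)"
      by (simp_all add: add_divide_distrib)
  qed
qed

lemma weighted_sum_step_le:
  fixes A :: "real^2^2"
  assumes "x' \<le> A$1$1 * x + A$1$2 * y + kc * u" "y' \<le> A$2$1 * x + A$2$2 * y + kh * u"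
    and "0 \<le> p1" "0 \<le> p2" "0 \<le> x" "0 \<le> y"
    and "p1 * A$1$1 + p2 * A$2$1 \<le> lam * p1" "p1 * A$1$2 + p2 * A$2$2 \<le> lam * p2"
  shows "p1 * x' + p2 * y' \<le> lam * (p1 * x + p2 * y) + (p1 * kc + p2 * kh) * u"
proof -
  have "p1 * x' + p2 * y' \<le> p1 * (A$1$1 * x + A$1$2 * y + kc * u) + p2 * (A$2$1 * x + A$2$2 * y + kh * u)"
    using assms(1-4) by (intro add_mono mult_left_mono)
  also have "\<dots> = (p1 * A$1$1 + p2 * A$2$1) * x + (p1 * A$1$2 + p2 * A$2$2) * y + (p1 * kc + p2 * kh) * u"
    by (simp add: algebra_simps)
  also have "\<dots> \<le> lam * p1 * x + lam * p2 * y + (p1 * kc + p2 * kh) * u"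
    using assms(5-8) by (intro add_right_mono add_mono mult_right_mono) auto
  finally show ?thesis
    by (simp add: algebra_simps)
qed

section \<open>A single LSTM cell\<close>

definition preact ::
  "(gate \<Rightarrow> real^'c) \<Rightarrow> (gate \<Rightarrow> real^'c^'c) \<Rightarrow> (gate \<Rightarrow> real^'c) \<Rightarrow> real^'c
    \<Rightarrow> gate \<Rightarrow> real^'c"
  where "preact wx U bb h g = wx g + U g *v h + bb g"

definition cell_c :: "(gate \<Rightarrow> real^'c) \<Rightarrow> real^'c \<Rightarrow> real^'c" where
  "cell_c z c = hadamard (vsig (z GF)) c + hadamard (vsig (z GI)) (vtanh (z GC))"

definition cell_h :: "(gate \<Rightarrow> real^'c) \<Rightarrow> real^'c \<Rightarrow> real^'c" where
  "cell_h z c = hadamard (vsig (z GO)) (vtanh c)"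

lemma cell_step_eq:
  "cell_step wx U bb s = (let z = preact wx U bb (snd s) in (cell_c z (fst s), cell_h z (cell_c z (fst s))))"
  by (simp add: cell_step_def preact_def cell_c_def cell_h_def Let_def)

definition preact_bounded :: "(gate \<Rightarrow> real) \<Rightarrow> (gate \<Rightarrow> real^'c) \<Rightarrow> bool" where
  "preact_bounded G z \<longleftrightarrow>
    (\<forall>g i. g \<noteq> GC \<longrightarrow> z g $ i \<le> G g) \<and> (\<forall>i. \<bar>z GC $ i\<bar> \<le> G GC)"

definition cell_bound :: "(gate \<Rightarrow> real) \<Rightarrow> real" where
  "cell_bound G = sigm (G GI) * tanh (G GC) / (1 - sigm (G GF))"

definition hidden_bound :: "(gate \<Rightarrow> real) \<Rightarrow> real" where
  "hidden_bound G = tanh (cell_bound G) * sigm (G GO)"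

definition cell_box :: "(gate \<Rightarrow> real) \<Rightarrow> ((real^'c) \<times> (real^'c)) set" where
  "cell_box G = {(c, h). vinf c \<le> cell_bound G \<and> vinf h \<le> hidden_bound G}"

lemma cell_bound_nonneg: "0 \<le> G GC \<Longrightarrow> 0 \<le> cell_bound G"
  unfolding cell_bound_def using sigm_pos[of "G GI"] sigm_less_1[of "G GF"] by simp

lemma
  assumes G: "\<And>g. 0 \<le> G g" and GG': "\<And>g. G g \<le> G' g"
  shows cell_bound_mono: "cell_bound G \<le> cell_bound G'"
    and hidden_bound_mono: "hidden_bound G \<le> hidden_bound G'"
proof -
  have "0 \<le> G' GC"
    using G GG' order_trans by blast
  then have "0 \<le> sigm (G' GI) * tanh (G' GC)"
    using sigm_pos[of "G' GI"] by simp
  then show "cell_bound G \<le> cell_bound G'"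
    unfolding cell_bound_def using G GG' sigm_pos sigm_less_1 sigm_mono
    by (intro frac_le mult_mono) (auto intro: less_imp_le simp: diff_le_mono2)
  then show "hidden_bound G \<le> hidden_bound G'"
    unfolding hidden_bound_def using G cell_bound_nonneg sigm_pos sigm_mono GG'
    by (intro mult_mono') (auto intro: less_imp_le)
qed

lemma
  assumes "preact_bounded G z"
  shows preact_bounded_GC_nonneg: "0 \<le> G GC"
    and abs_vsig_le_bound: "g \<noteq> GC \<Longrightarrow> \<bar>vsig (z g) $ i\<bar> \<le> sigm (G g)"
    and abs_vtanh_le_bound: "\<bar>vtanh (z GC) $ i\<bar> \<le> tanh (G GC)"
  using assms sigm_pos[of "z g $ i"] sigm_mono[of "z g $ i" "G g"]
    abs_ge_zero[of "z GC $ i"] order_trans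
  by (auto simp: preact_bounded_def vsig_def vtanh_def simp flip: tanh_real_abs)

lemma cell_c_bounded:
  assumes z: "preact_bounded G z" and c: "vinf c \<le> cell_bound G"
  shows "vinf (cell_c z c) \<le> cell_bound G"
  unfolding vinf_le_iff
proof
  fix i
  have "0 \<le> sigm (G GF)" "0 \<le> sigm (G GI)"
    using sigm_pos less_imp_le by blast+
  have "\<bar>cell_c z c $ i\<bar>
      \<le> \<bar>vsig (z GF) $ i\<bar> * \<bar>c $ i\<bar> + \<bar>vsig (z GI) $ i\<bar> * \<bar>vtanh (z GC) $ i\<bar>"
    by (simp add: cell_c_def hadamard_def abs_mult[symmetric] abs_triangle_ineq)
  also have "\<dots> \<le> sigm (G GF) * cell_bound G + sigm (G GI) * tanh (G GC)"
    using c \<open>0 \<le> sigm (G GF)\<close> \<open>0 \<le> sigm (G GI)\<close>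
    by (intro add_mono mult_mono abs_vsig_le_bound[OF z] abs_vtanh_le_bound[OF z])
       (auto simp: vinf_le_iff)
  also have "\<dots> = cell_bound G"
    using sigm_less_1[of "G GF"] by (simp add: cell_bound_def field_simps)
  finally show "\<bar>cell_c z c $ i\<bar> \<le> cell_bound G" .
qed

lemma cell_h_bounded:
  assumes z: "preact_bounded G z" and c: "vinf c \<le> cell_bound G"
  shows "vinf (cell_h z c) \<le> hidden_bound G"
  unfolding vinf_le_iff
proof
  fix i
  have "\<bar>c $ i\<bar> \<le> cell_bound G"
    using c by (simp add: vinf_le_iff)
  then have "\<bar>vtanh c $ i\<bar> \<le> tanh (cell_bound G)"
    by (simp add: vtanh_def flip: tanh_real_abs)
  from mult_mono'[OF this abs_vsig_le_bound[OF z, of GO i]]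
  show "\<bar>cell_h z c $ i\<bar> \<le> hidden_bound G"
    by (simp add: cell_h_def hidden_bound_def hadamard_def abs_mult mult.commute)
qed

lemma cell_c_diff:
  assumes z1: "preact_bounded G z1" and z2: "preact_bounded G z2" and c2: "vinf c2 \<le> cell_bound G"
  shows "norm (cell_c z1 c1 - cell_c z2 c2) \<le> sigm (G GF) * norm (c1 - c2)
    + cell_bound G * (norm (z1 GF - z2 GF) / 4) + sigm (G GI) * norm (z1 GC - z2 GC)
    + tanh (G GC) * (norm (z1 GI - z2 GI) / 4)"
proof -
  have "cell_c z1 c1 - cell_c z2 c2 =
      hadamard (vsig (z1 GF)) (c1 - c2) + hadamard c2 (vsig (z1 GF) - vsig (z2 GF))
      + hadamard (vsig (z1 GI)) (vtanh (z1 GC) - vtanh (z2 GC))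
      + hadamard (vtanh (z2 GC)) (vsig (z1 GI) - vsig (z2 GI))"
    by (simp add: cell_c_def vec_eq_iff hadamard_def algebra_simps)
  moreover have "norm (hadamard (vsig (z1 GF)) (c1 - c2)) \<le> sigm (G GF) * norm (c1 - c2)"
    using abs_vsig_le_bound[OF z1] by (intro norm_hadamard_le) auto
  moreover have "norm (hadamard c2 (vsig (z1 GF) - vsig (z2 GF)))
      \<le> cell_bound G * (norm (z1 GF - z2 GF) / 4)"
    by (rule norm_hadamard_le) (use c2 norm_vsig_diff_le in \<open>auto simp: vinf_le_iff\<close>)
  moreover have "norm (hadamard (vsig (z1 GI)) (vtanh (z1 GC) - vtanh (z2 GC)))
      \<le> sigm (G GI) * norm (z1 GC - z2 GC)"
    using abs_vsig_le_bound[OF z1] by (intro norm_hadamard_le norm_vtanh_diff_le) auto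
  moreover have "norm (hadamard (vtanh (z2 GC)) (vsig (z1 GI) - vsig (z2 GI)))
      \<le> tanh (G GC) * (norm (z1 GI - z2 GI) / 4)"
    using abs_vtanh_le_bound[OF z2] by (intro norm_hadamard_le norm_vsig_diff_le)
  ultimately show ?thesis
    by (metis norm_triangle_mono)
qed

lemma cell_h_diff:
  assumes z1: "preact_bounded G z1" and c2: "vinf c2 \<le> cell_bound G"
  shows "norm (cell_h z1 c1 - cell_h z2 c2) \<le> sigm (G GO) * norm (c1 - c2)
    + tanh (cell_bound G) * (norm (z1 GO - z2 GO) / 4)"
proof -
  have "cell_h z1 c1 - cell_h z2 c2 =
      hadamard (vsig (z1 GO)) (vtanh c1 - vtanh c2)
      + hadamard (vtanh c2) (vsig (z1 GO) - vsig (z2 GO))"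
    by (simp add: cell_h_def vec_eq_iff hadamard_def algebra_simps)
  moreover have "norm (hadamard (vsig (z1 GO)) (vtanh c1 - vtanh c2)) \<le> sigm (G GO) * norm (c1 - c2)"
    using abs_vsig_le_bound[OF z1] by (intro norm_hadamard_le norm_vtanh_diff_le) auto
  moreover have "\<bar>vtanh c2 $ i\<bar> \<le> tanh (cell_bound G)" for i
    using c2 by (simp add: vinf_le_iff vtanh_def flip: tanh_real_abs)
  then have "norm (hadamard (vtanh c2) (vsig (z1 GO) - vsig (z2 GO)))
      \<le> tanh (cell_bound G) * (norm (z1 GO - z2 GO) / 4)"
    by (intro norm_hadamard_le norm_vsig_diff_le)
  ultimately show ?thesis
    by (metis norm_triangle_mono)
qed

definition cell_gain :: "(gate \<Rightarrow> real) \<Rightarrow> (gate \<Rightarrow> real^'n^'c) \<Rightarrow> real" where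
  "cell_gain G M = 1/4 * opnorm2 (M GF) * cell_bound G + sigm (G GI) * opnorm2 (M GC)
     + 1/4 * opnorm2 (M GI) * tanh (G GC)"

definition hidden_gain :: "(gate \<Rightarrow> real) \<Rightarrow> (gate \<Rightarrow> real^'n^'c) \<Rightarrow> real" where
  "hidden_gain G M = cell_gain G M * sigm (G GO) + 1/4 * tanh (cell_bound G) * opnorm2 (M GO)"

lemma cell_gain_nonneg: "0 \<le> G GC \<Longrightarrow> 0 \<le> cell_gain G M"
  unfolding cell_gain_def using opnorm2_nonneg cell_bound_nonneg sigm_pos
  by (intro add_nonneg_nonneg mult_nonneg_nonneg) (auto intro: less_imp_le)

lemma hidden_gain_nonneg: "0 \<le> G GC \<Longrightarrow> 0 \<le> hidden_gain G M"
  unfolding hidden_gain_def using opnorm2_nonneg cell_bound_nonneg cell_gain_nonneg sigm_pos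
  by (intro add_nonneg_nonneg mult_nonneg_nonneg) (auto intro: less_imp_le)

lemma
  assumes G: "\<And>g. 0 \<le> G g" and GG': "\<And>g. G g \<le> G' g"
  shows cell_gain_mono: "cell_gain G M \<le> cell_gain G' M"
    and hidden_gain_mono: "hidden_gain G M \<le> hidden_gain G' M"
proof -
  show "cell_gain G M \<le> cell_gain G' M"
    unfolding cell_gain_def using G GG' opnorm2_nonneg cell_bound_mono sigm_mono
    by (intro add_mono mult_left_mono mult_right_mono) auto
  moreover have "0 \<le> cell_gain G M"
    using G by (rule cell_gain_nonneg)
  ultimately show "hidden_gain G M \<le> hidden_gain G' M"
    unfolding hidden_gain_def using G GG' opnorm2_nonneg cell_bound_mono sigm_mono sigm_pos
      cell_bound_nonneg
    by (intro add_mono mult_mono mult_right_mono) (auto intro: less_imp_le)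
qed

lemma norm_preact_diff_le:
  "norm (preact (\<lambda>g. W g *v x1) U bb h1 g - preact (\<lambda>g. W g *v x2) U bb h2 g)
    \<le> opnorm2 (W g) * norm (x1 - x2) + opnorm2 (U g) * norm (h1 - h2)"
proof -
  have "preact (\<lambda>g. W g *v x1) U bb h1 g - preact (\<lambda>g. W g *v x2) U bb h2 g
      = W g *v (x1 - x2) + U g *v (h1 - h2)"
    by (simp add: preact_def matrix_vector_mult_diff_distrib algebra_simps)
  then show ?thesis
    by (metis norm_triangle_mono norm_mult_le_opnorm2)
qed

lemma cell_step_in_cell_box:
  assumes "preact_bounded G (preact wx U bb (snd s))" and "vinf (fst s) \<le> cell_bound G"
  shows "cell_step wx U bb s \<in> cell_box G"
  using assms by (simp add: cell_step_eq cell_box_def cell_c_bounded cell_h_bounded Let_def)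

lemma cell_step_diff:
  fixes W :: "gate \<Rightarrow> real^'n^'c" and U :: "gate \<Rightarrow> real^'c^'c" and bb :: "gate \<Rightarrow> real^'c"
    and x1 x2 :: "real^'n" and s1 s2 :: "(real^'c) \<times> (real^'c)"
  defines "z1 \<equiv> preact (\<lambda>g. W g *v x1) U bb (snd s1)"
    and "z2 \<equiv> preact (\<lambda>g. W g *v x2) U bb (snd s2)"
  assumes z1: "preact_bounded G z1" and z2: "preact_bounded G z2"
    and c2: "vinf (fst s2) \<le> cell_bound G"
  defines "s1' \<equiv> cell_step (\<lambda>g. W g *v x1) U bb s1"
    and "s2' \<equiv> cell_step (\<lambda>g. W g *v x2) U bb s2"
  shows "norm (fst s1' - fst s2') \<le> sigm (G GF) * norm (fst s1 - fst s2)
      + cell_gain G U * norm (snd s1 - snd s2) + cell_gain G W * norm (x1 - x2)"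
    and "norm (snd s1' - snd s2') \<le> sigm (G GO) * sigm (G GF) * norm (fst s1 - fst s2)
      + hidden_gain G U * norm (snd s1 - snd s2) + hidden_gain G W * norm (x1 - x2)"
proof -
  define dz where "dz g = opnorm2 (W g) * norm (x1 - x2) + opnorm2 (U g) * norm (snd s1 - snd s2)" for g
  have dz: "norm (z1 g - z2 g) \<le> dz g" for g
    unfolding z1_def z2_def dz_def by (rule norm_preact_diff_le)
  have nonneg: "0 \<le> cell_bound G" "0 \<le> tanh (G GC)" "0 \<le> sigm (G g)" for g
    using preact_bounded_GC_nonneg[OF z1] cell_bound_nonneg sigm_pos less_imp_le by auto
  have "norm (fst s1' - fst s2') \<le> sigm (G GF) * norm (fst s1 - fst s2) + cell_bound G * (dz GF / 4)
      + sigm (G GI) * dz GC + tanh (G GC) * (dz GI / 4)"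
    unfolding s1'_def s2'_def cell_step_eq Let_def z1_def[symmetric] z2_def[symmetric] fst_conv
    by (rule order_trans[OF cell_c_diff[OF z1 z2 c2]])
       (intro add_mono mult_left_mono divide_right_mono dz order_refl nonneg; simp)
  then show c_diff: "norm (fst s1' - fst s2') \<le> sigm (G GF) * norm (fst s1 - fst s2)
      + cell_gain G U * norm (snd s1 - snd s2) + cell_gain G W * norm (x1 - x2)"
    by (simp add: dz_def cell_gain_def algebra_simps add_divide_distrib)
  have "norm (snd s1' - snd s2') \<le> sigm (G GO) * norm (fst s1' - fst s2')
      + tanh (cell_bound G) * (norm (z1 GO - z2 GO) / 4)"
    unfolding s1'_def s2'_def cell_step_eq Let_def z1_def[symmetric] z2_def[symmetric] prod.sel
    by (rule cell_h_diff[OF z1 cell_c_bounded[OF z2 c2]])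
  also have "\<dots> \<le> sigm (G GO) * (sigm (G GF) * norm (fst s1 - fst s2)
      + cell_gain G U * norm (snd s1 - snd s2) + cell_gain G W * norm (x1 - x2))
      + tanh (cell_bound G) * (dz GO / 4)"
    using c_diff dz[of GO] nonneg by (intro add_mono mult_left_mono divide_right_mono) auto
  finally show "norm (snd s1' - snd s2') \<le> sigm (G GO) * sigm (G GF) * norm (fst s1 - fst s2)
      + hidden_gain G U * norm (snd s1 - snd s2) + hidden_gain G W * norm (x1 - x2)"
    by (simp add: dz_def hidden_gain_def cell_gain_def algebra_simps add_divide_distrib)
qed

definition gate_bound ::
  "real \<Rightarrow> real^'n^'c \<Rightarrow> real^'c^'c \<Rightarrow> real^'c \<Rightarrow> gate \<Rightarrow> real \<Rightarrow> real" where
  "gate_bound xm W U bb g e =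
    (let v = xm *\<^sub>R rowabs W + e *\<^sub>R rowabs U
     in if g = GC then vinf (v + vabs bb) else vinf (vpos (v + bb)))"

lemma gate_bound_nonneg: "0 \<le> gate_bound xm W U bb g e"
  by (simp add: gate_bound_def Let_def vinf_nonneg)

lemma gate_bound_mono:
  assumes "0 \<le> xm" "0 \<le> e" "e \<le> e'"
  shows "gate_bound xm W U bb g e \<le> gate_bound xm W U bb g e'"
proof -
  define v v' where "v = xm *\<^sub>R rowabs W + e *\<^sub>R rowabs U"
    and "v' = xm *\<^sub>R rowabs W + e' *\<^sub>R rowabs U"
  have "0 \<le> v $ i" "v $ i \<le> v' $ i" for i
    using assms rowabs_nonneg[of U i] rowabs_nonneg[of W i]
    by (simp_all add: v_def v'_def mult_right_mono)
  then have "\<bar>(v + vabs bb) $ i\<bar> \<le> \<bar>(v' + vabs bb) $ i\<bar>"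
    and "\<bar>vpos (v + bb) $ i\<bar> \<le> \<bar>vpos (v' + bb) $ i\<bar>" for i
    by (simp_all add: vabs_def vpos_def add_right_mono max.coboundedI1 order_trans[OF _ abs_ge_self])
  then show ?thesis
    unfolding gate_bound_def Let_def v_def[symmetric] v'_def[symmetric] by (simp add: vinf_mono)
qed

lemma preact_bounded_gate_bound:
  fixes W :: "gate \<Rightarrow> real^'n^'c"
  assumes "\<And>j. \<bar>x $ j\<bar> \<le> xm" and "\<And>j. \<bar>h $ j\<bar> \<le> e"
  shows "preact_bounded (\<lambda>g. gate_bound xm (W g) (U g) (bb g) g e) (preact (\<lambda>g. W g *v x) U bb h)"
proof -
  define v where "v g = xm *\<^sub>R rowabs (W g) + e *\<^sub>R rowabs (U g)" for g
  have v: "\<bar>(W g *v x + U g *v h) $ i\<bar> \<le> v g $ i" for g i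
    using abs_triangle_ineq[of "(W g *v x) $ i" "(U g *v h) $ i"]
      abs_mult_vec_le_rowabs[OF assms(1), of "W g" i] abs_mult_vec_le_rowabs[OF assms(2), of "U g" i]
    by (simp add: v_def)
  have "preact (\<lambda>g. W g *v x) U bb h g $ i \<le> vinf (vpos (v g + bb g))" for g i
  proof -
    have "preact (\<lambda>g. W g *v x) U bb h g $ i \<le> \<bar>vpos (v g + bb g) $ i\<bar>"
      using v[of g i] by (simp add: preact_def vpos_def)
    then show ?thesis
      using abs_le_vinf order_trans by blast
  qed
  moreover have "\<bar>preact (\<lambda>g. W g *v x) U bb h GC $ i\<bar> \<le> vinf (v GC + vabs (bb GC))" for i
  proof -
    have "\<bar>preact (\<lambda>g. W g *v x) U bb h GC $ i\<bar> \<le> \<bar>(v GC + vabs (bb GC)) $ i\<bar>"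
      using v[of GC i] by (simp add: preact_def vabs_def)
    then show ?thesis
      using abs_le_vinf order_trans by blast
  qed
  ultimately show ?thesis
    unfolding preact_bounded_def gate_bound_def Let_def v_def[symmetric] by simp
qed

section \<open>Cascades of contractions\<close>

lemma geometric_recursion_bound:
  fixes w d :: "nat \<Rightarrow> real"
  assumes rec: "\<And>s. s < t \<Longrightarrow> w (Suc s) \<le> mu * w s + Q * d s"
    and d: "\<And>s. s < t \<Longrightarrow> d s \<le> M"
    and "0 \<le> mu" "mu < 1" "0 \<le> Q" "0 \<le> M"
  shows "w t \<le> mu^t * w 0 + Q / (1 - mu) * M"
  using rec d
proof (induction t)
  case 0
  then show ?case
    using assms(3-6) by simp
next
  case (Suc t)
  have "w (Suc t) \<le> mu * w t + Q * M"
    using Suc.prems(1)[of t] mult_left_mono[OF Suc.prems(2)[of t] assms(5)] by simp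
  also have "\<dots> \<le> mu * (mu^t * w 0 + Q / (1 - mu) * M) + Q * M"
    using Suc assms(3) by (intro add_right_mono mult_left_mono) simp_all
  also have "\<dots> = mu^(Suc t) * w 0 + Q / (1 - mu) * M"
    using assms(4) by (simp add: field_simps)
  finally show ?case .
qed

lemma sum_shifted_layers_le:
  fixes v :: "nat \<Rightarrow> real"
  assumes "0 \<le> e" "0 \<le> d" "\<forall>l\<in>{1..L}. 0 \<le> v l"
  shows "(\<Sum>l=1..L. e^l * (if l = 1 then d else v (l - 1))) \<le> e * d + e * (\<Sum>l=1..L. e^l * v l)"
proof (cases L)
  case 0
  then show ?thesis
    using assms by simp
next
  case (Suc n)
  have "(\<Sum>l=1..Suc n. e^l * (if l = 1 then d else v (l - 1))) = e * d + e * (\<Sum>l=1..n. e^l * v l)"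
    by (induction n) (simp_all add: algebra_simps)
  moreover have "(\<Sum>l=1..n. e^l * v l) \<le> (\<Sum>l=1..Suc n. e^l * v l)"
    using assms Suc by simp
  ultimately show ?thesis
    using Suc assms(1) by (simp add: mult_left_mono)
qed

lemma weighted_cascade_step:
  fixes v v' :: "nat \<Rightarrow> real"
  assumes "0 \<le> e" "0 \<le> K" "0 \<le> d" "\<forall>l\<in>{1..L}. 0 \<le> v' l"
    and step: "\<And>l. l \<in> {1..L} \<Longrightarrow> v' l \<le> lam * v l + K * (if l = 1 then d else v' (l - 1))"
  shows "(1 - K * e) * (\<Sum>l=1..L. e^l * v' l) \<le> lam * (\<Sum>l=1..L. e^l * v l) + K * e * d"
proof -
  have "(\<Sum>l=1..L. e^l * v' l) \<le> (\<Sum>l=1..L. e^l * (lam * v l + K * (if l = 1 then d else v' (l - 1))))"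
    using assms(1) step by (intro sum_mono mult_left_mono) simp_all
  also have "\<dots> = lam * (\<Sum>l=1..L. e^l * v l) + K * (\<Sum>l=1..L. e^l * (if l = 1 then d else v' (l - 1)))"
    by (simp add: sum.distrib sum_distrib_left algebra_simps)
  also have "\<dots> \<le> lam * (\<Sum>l=1..L. e^l * v l) + K * (e * d + e * (\<Sum>l=1..L. e^l * v' l))"
    using assms by (intro add_left_mono mult_left_mono sum_shifted_layers_le)
  finally show ?thesis
    by (simp add: algebra_simps)
qed

lemma weighted_cascade_bound:
  fixes V :: "nat \<Rightarrow> nat \<Rightarrow> real" and d :: "nat \<Rightarrow> real"
  assumes "0 < e" "e \<le> 1" "0 \<le> K" "0 \<le> lam" "lam < 1 - K * e"
    and V: "\<And>l s. l \<in> {1..L} \<Longrightarrow> 0 \<le> V l s"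
    and d: "\<And>s. 0 \<le> d s" "\<And>s. s < t \<Longrightarrow> d s \<le> M" and "0 \<le> M"
    and step: "\<And>l s. l \<in> {1..L} \<Longrightarrow> s < t
      \<Longrightarrow> V l (Suc s) \<le> lam * V l s + K * (if l = 1 then d s else V (l - 1) (Suc s))"
  shows "e^L * (\<Sum>l=1..L. V l t)
    \<le> (lam / (1 - K * e))^t * (\<Sum>l=1..L. V l 0) + K * e / (1 - K * e - lam) * M"
proof -
  define q where "q = 1 - K * e"
  \<comment> \<open>weighting layer \<open>l\<close> by \<open>e ^ l\<close> makes the coupling to layer \<open>l - 1\<close> a perturbation of size \<open>K * e\<close>\<close>
  define W where "W s = (\<Sum>l=1..L. e^l * V l s)" for s
  have "0 < q"
    using assms(4,5) by (simp add: q_def)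
  have "q * W (Suc s) \<le> lam * W s + K * e * d s" if "s < t" for s
    unfolding W_def q_def by (rule weighted_cascade_step) (use assms step that in auto)
  then have "W (Suc s) \<le> lam / q * W s + K * e / q * d s" if "s < t" for s
    using that \<open>0 < q\<close> by (simp add: field_simps)
  then have "W t \<le> (lam / q)^t * W 0 + K * e / q / (1 - lam / q) * M"
    by (rule geometric_recursion_bound) (use assms \<open>0 < q\<close> in \<open>auto simp: q_def\<close>)
  also have "K * e / q / (1 - lam / q) = K * e / (q - lam)"
    using \<open>0 < q\<close> by (simp add: field_simps)
  finally have W_t: "W t \<le> (lam / q)^t * W 0 + K * e / (q - lam) * M" .
  have "e^L * (\<Sum>l=1..L. V l t) \<le> W t"
    unfolding W_def sum_distrib_left
    using V assms(1,2) by (intro sum_mono mult_right_mono power_decreasing) auto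
  moreover have "(lam / q)^t * W 0 \<le> (lam / q)^t * (\<Sum>l=1..L. V l 0)"
    unfolding W_def using V assms(1,2,4) \<open>0 < q\<close>
    by (intro mult_left_mono sum_mono mult_left_le_one_le) (auto simp: power_le_one)
  ultimately show ?thesis
    using W_t unfolding q_def by linarith
qed

lemma cascade_input_to_state_bound:
  fixes lam K :: real and L :: nat
  assumes "lam < 1" "0 \<le> K"
  obtains mu C1 C2 where "0 < mu" "mu < 1" "0 < C1" "0 < C2"
    "\<And>V d M t. (\<And>l s. l \<in> {1..L} \<Longrightarrow> 0 \<le> V l s) \<Longrightarrow> (\<And>s. 0 \<le> d s) \<Longrightarrow> 0 \<le> M
      \<Longrightarrow> (\<And>s. s < t \<Longrightarrow> d s \<le> M)
      \<Longrightarrow> (\<And>l s. l \<in> {1..L} \<Longrightarrow> s < t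
            \<Longrightarrow> V l (Suc s) \<le> lam * V l s + K * (if l = 1 then d s else V (l - 1) (Suc s)))
      \<Longrightarrow> (\<Sum>l=1..L. V l t) \<le> C1 * mu^t * (\<Sum>l=1..L. V l 0) + C2 * M"
proof -
  \<comment> \<open>a positive rate is needed: \<open>class_KL\<close> requires strict monotonicity in \<open>s\<close> for every \<open>t\<close>\<close>
  define lam' where "lam' = max lam (1/2)"
  define e where "e = (1 - lam') / (2 * (K + 1))"
  define q where "q = 1 - K * e"
  have "lam \<le> lam'" "1/2 \<le> lam'" "lam' < 1"
    using assms by (simp_all add: lam'_def)
  then have "0 < e" "e \<le> 1" "K * e \<le> (1 - lam') / 2"
    using assms(2) by (simp_all add: e_def field_simps)
  then have "lam' < q"
    using \<open>lam' < 1\<close> by (simp add: q_def)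
  define C2 where "C2 = K * e / (q - lam') / e^L + 1"
  show thesis
  proof (rule that[of "lam' / q" "1 / e^L" C2])
    fix V d M t
    assume V: "\<And>l s. l \<in> {1..L} \<Longrightarrow> 0 \<le> V l s" and d: "\<And>s. 0 \<le> d s"
      and "0 \<le> M" and d_le: "\<And>s. s < t \<Longrightarrow> d s \<le> M"
      and step: "\<And>l s. l \<in> {1..L} \<Longrightarrow> s < t
        \<Longrightarrow> V l (Suc s) \<le> lam * V l s + K * (if l = 1 then d s else V (l - 1) (Suc s))"
    have "V l (Suc s) \<le> lam' * V l s + K * (if l = 1 then d s else V (l - 1) (Suc s))"
      if "l \<in> {1..L}" "s < t" for l s
      using step[OF that] mult_right_mono[OF \<open>lam \<le> lam'\<close> V[OF that(1)], of s] by linarith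
    from weighted_cascade_bound[where V = V and d = d and lam = lam',
        OF \<open>0 < e\<close> \<open>e \<le> 1\<close> \<open>0 \<le> K\<close> _ _ V d d_le \<open>0 \<le> M\<close> this]
    have "e^L * (\<Sum>l=1..L. V l t) \<le> (lam' / q)^t * (\<Sum>l=1..L. V l 0) + K * e / (q - lam') * M"
      using \<open>lam' < q\<close> \<open>1/2 \<le> lam'\<close> by (simp add: q_def)
    then have "(\<Sum>l=1..L. V l t) \<le> ((lam' / q)^t * (\<Sum>l=1..L. V l 0) + K * e / (q - lam') * M) / e^L"
      using \<open>0 < e\<close> by (simp add: pos_le_divide_eq mult.commute)
    also have "\<dots> \<le> 1 / e^L * (lam' / q)^t * (\<Sum>l=1..L. V l 0) + C2 * M"
      using \<open>0 \<le> M\<close> by (simp add: C2_def add_divide_distrib distrib_right)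
    finally show "(\<Sum>l=1..L. V l t) \<le> 1 / e^L * (lam' / q)^t * (\<Sum>l=1..L. V l 0) + C2 * M" .
  qed (use \<open>1/2 \<le> lam'\<close> \<open>lam' < q\<close> \<open>0 < e\<close> assms(2)
      in \<open>auto simp: C2_def intro: add_nonneg_pos\<close>)
qed

lemma class_KL_exponential:
  assumes "0 < C" "0 < mu" "mu < 1"
  shows "class_KL (\<lambda>s t. C * mu^t * s)"
proof -
  have "(\<lambda>t. C * mu^t * s) \<longlonglongrightarrow> C * 0 * s" for s
    using assms by (intro tendsto_intros LIMSEQ_power_zero) simp
  moreover have "antimono (\<lambda>t. C * mu^t * s)" if "0 \<le> s" for s
    using assms that by (intro antimonoI mult_right_mono mult_left_mono power_decreasing) auto
  ultimately show ?thesis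
    using assms unfolding class_KL_def class_K_def
    by (auto intro!: continuous_intros strict_mono_onI)
qed

lemma class_Kinf_linear:
  assumes "0 < C"
  shows "class_Kinf (\<lambda>r. C * r)"
proof -
  have "M < C * ((\<bar>M\<bar> + 1) / C)" for M
    using assms by simp
  then show ?thesis
    using assms unfolding class_Kinf_def class_K_def
    by (auto intro!: continuous_intros strict_mono_onI exI[of _ "(\<bar>_\<bar> + 1) / C"])
qed

lemma state_dist_le_weighted_sum:
  assumes "\<And>l. l \<in> {1..L} \<Longrightarrow> 1 \<le> p1 l \<and> 1 \<le> p2 l"
  shows "state_dist L s1 s2
    \<le> (\<Sum>l=1..L. p1 l * norm (fst (s1 l) - fst (s2 l)) + p2 l * norm (snd (s1 l) - snd (s2 l)))"
proof -
  have "state_dist L s1 s2 = L2_set (\<lambda>l. norm (s1 l - s2 l)) {1..L}"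
    by (simp add: state_dist_def L2_set_def)
  also have "\<dots> \<le> (\<Sum>l=1..L. norm (s1 l - s2 l))"
    by (rule L2_set_le_sum) simp
  also have "\<dots> \<le> (\<Sum>l=1..L. p1 l * norm (fst (s1 l) - fst (s2 l)) + p2 l * norm (snd (s1 l) - snd (s2 l)))"
  proof (rule sum_mono)
    fix l
    assume "l \<in> {1..L}"
    then have "norm (fst (s1 l) - fst (s2 l)) \<le> p1 l * norm (fst (s1 l) - fst (s2 l))"
      and "norm (snd (s1 l) - snd (s2 l)) \<le> p2 l * norm (snd (s1 l) - snd (s2 l))"
      using assms mult_right_mono[of 1 "p1 l"] mult_right_mono[of 1 "p2 l"] by auto
    moreover have "norm (s1 l - s2 l) \<le> norm (fst (s1 l) - fst (s2 l)) + norm (snd (s1 l) - snd (s2 l))"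
      by (metis fst_diff snd_diff norm_Pair_le prod.collapse)
    ultimately show "norm (s1 l - s2 l)
      \<le> p1 l * norm (fst (s1 l) - fst (s2 l)) + p2 l * norm (snd (s1 l) - snd (s2 l))"
      by linarith
  qed
  finally show ?thesis .
qed

lemma weighted_sum_le_state_dist:
  assumes "\<And>l. l \<in> {1..L} \<Longrightarrow> 0 \<le> p1 l \<and> 0 \<le> p2 l \<and> p1 l \<le> P \<and> p2 l \<le> P"
  shows "(\<Sum>l=1..L. p1 l * norm (fst (s1 l) - fst (s2 l)) + p2 l * norm (snd (s1 l) - snd (s2 l)))
    \<le> 2 * real L * P * state_dist L s1 s2"
proof -
  have "p1 l * norm (fst (s1 l) - fst (s2 l)) + p2 l * norm (snd (s1 l) - snd (s2 l))
      \<le> 2 * P * state_dist L s1 s2" if "l \<in> {1..L}" for l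
  proof -
    have "norm (s1 l - s2 l) \<le> state_dist L s1 s2"
      using member_le_L2_set[of "{1..L}" l "\<lambda>l. norm (s1 l - s2 l)"] that
      by (simp add: state_dist_def L2_set_def)
    moreover have "s1 l - s2 l = (fst (s1 l) - fst (s2 l), snd (s1 l) - snd (s2 l))"
      by (simp add: prod_eq_iff)
    ultimately have "norm (fst (s1 l) - fst (s2 l)) \<le> state_dist L s1 s2"
      and "norm (snd (s1 l) - snd (s2 l)) \<le> state_dist L s1 s2"
      using norm_fst_le[of "fst (s1 l) - fst (s2 l)" "snd (s1 l) - snd (s2 l)"]
        norm_snd_le[of "snd (s1 l) - snd (s2 l)" "fst (s1 l) - fst (s2 l)"] by simp_all
    then have "p1 l * norm (fst (s1 l) - fst (s2 l)) \<le> P * state_dist L s1 s2"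
      and "p2 l * norm (snd (s1 l) - snd (s2 l)) \<le> P * state_dist L s1 s2"
      using assms[OF that] by (auto intro!: mult_mono)
    then show ?thesis
      by linarith
  qed
  then have "(\<Sum>l=1..L. p1 l * norm (fst (s1 l) - fst (s2 l)) + p2 l * norm (snd (s1 l) - snd (s2 l)))
      \<le> (\<Sum>l=1..L. 2 * P * state_dist L s1 s2)"
    by (rule sum_mono)
  then show ?thesis
    by simp
qed

section \<open>The layered LSTM\<close>

lemma Gfun_first_layer:
  "l = 1 \<Longrightarrow> Gfun xmax Wx Wh U b l g e = gate_bound xmax (Wx g) (U l g) (b l g) g e"
  by (simp add: Gfun_def gate_bound_def)

lemma Gfun_upper_layer:
  "l \<noteq> 1 \<Longrightarrow> Gfun xmax Wx Wh U b l g e = gate_bound 1 (Wh l g) (U l g) (b l g) g e"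
  by (simp add: Gfun_def gate_bound_def)

lemma Gfun_nonneg: "0 \<le> Gfun xmax Wx Wh U b l g e"
  by (cases "l = 1") (simp_all add: Gfun_first_layer Gfun_upper_layer gate_bound_nonneg)

lemma Gfun_mono:
  "0 \<le> xmax \<Longrightarrow> 0 \<le> e \<Longrightarrow> e \<le> e'
    \<Longrightarrow> Gfun xmax Wx Wh U b l g e \<le> Gfun xmax Wx Wh U b l g e'"
  by (cases "l = 1") (simp_all add: Gfun_first_layer Gfun_upper_layer gate_bound_mono)

declare eta_prev.simps(2) [simp del]

lemma lstm_traj_first_layer:
  "lstm_traj Wx Wh U b x s0 (Suc t) 1 =
    cell_step (\<lambda>g. Wx g *v x t) (U 1) (b 1) (lstm_traj Wx Wh U b x s0 t 1)"
  by simp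

lemma lstm_traj_upper_layer:
  assumes "2 \<le> l"
  shows "lstm_traj Wx Wh U b x s0 (Suc t) l =
    cell_step (\<lambda>g. Wh l g *v snd (lstm_traj Wx Wh U b x s0 (Suc t) (l - 1))) (U l) (b l)
      (lstm_traj Wx Wh U b x s0 t l)"
proof -
  obtain m where "l = Suc (Suc m)"
    using assms by (metis add_2_eq_Suc le_Suc_ex)
  then show ?thesis
    by simp
qed

context
  fixes xmax :: real and Wx :: "gate \<Rightarrow> real^'x^'c" and Wh :: "nat \<Rightarrow> gate \<Rightarrow> real^'c^'c"
    and U :: "nat \<Rightarrow> gate \<Rightarrow> real^'c^'c" and b :: "nat \<Rightarrow> gate \<Rightarrow> real^'c"
begin

abbreviation "traj \<equiv> lstm_traj Wx Wh U b"
abbreviation "S \<equiv> Sset xmax Wx Wh U b"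

definition layer_gates :: "nat \<Rightarrow> nat \<Rightarrow> gate \<Rightarrow> real" where
  "layer_gates l k g = Gfun xmax Wx Wh U b l g (eta_prev xmax Wx Wh U b l k)"

lemma layer_gates_first_layer:
  "layer_gates 1 k = (\<lambda>g. gate_bound xmax (Wx g) (U 1 g) (b 1 g) g (eta_prev xmax Wx Wh U b 1 k))"
  by (simp add: fun_eq_iff layer_gates_def Gfun_first_layer)

lemma layer_gates_upper_layer:
  "l \<noteq> 1 \<Longrightarrow>
    layer_gates l k = (\<lambda>g. gate_bound 1 (Wh l g) (U l g) (b l g) g (eta_prev xmax Wx Wh U b l k))"
  by (simp add: fun_eq_iff layer_gates_def Gfun_upper_layer)

lemma eta_prev_Suc: "eta_prev xmax Wx Wh U b l (Suc k) = hidden_bound (layer_gates l k)"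
  by (simp add: eta_prev.simps(2) layer_gates_def hidden_bound_def cell_bound_def Let_def)

lemma layer_gates_nonneg: "0 \<le> layer_gates l k g"
  by (simp add: layer_gates_def Gfun_nonneg)

lemma sigbar_eq: "sigbar xmax Wx Wh U b l g k = sigm (layer_gates l k g)"
  by (simp add: sigbar_def layer_gates_def)

lemma phibar_eq: "phibar xmax Wx Wh U b l k = tanh (layer_gates l k GC)"
  by (simp add: phibar_def layer_gates_def)

lemma cbar_eq: "cbar xmax Wx Wh U b l k = cell_bound (layer_gates l k)"
  by (simp add: cbar_def sigbar_eq phibar_def layer_gates_def cell_bound_def)

lemma Sset_eq: "Sset xmax Wx Wh U b l k = cell_box (layer_gates l k)"
  by (simp add: Sset_def cell_box_def cbar_eq sigbar_eq hidden_bound_def)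

lemma A_s_entries:
  "A_s xmax Wx Wh U b l k $ 1 $ 1 = sigm (layer_gates l k GF)"
  "A_s xmax Wx Wh U b l k $ 1 $ 2 = cell_gain (layer_gates l k) (U l)"
  "A_s xmax Wx Wh U b l k $ 2 $ 1 = sigm (layer_gates l k GO) * sigm (layer_gates l k GF)"
  "A_s xmax Wx Wh U b l k $ 2 $ 2 = hidden_gain (layer_gates l k) (U l)"
  by (simp_all add: A_s_def Let_def alpha_s_def cell_gain_def hidden_gain_def sigbar_eq cbar_eq
      phibar_eq)

lemma eta_prev_nonneg: "0 \<le> eta_prev xmax Wx Wh U b l k"
  by (cases k) (simp_all add: eta_prev_Suc hidden_bound_def cell_bound_nonneg layer_gates_nonneg
      sigm_pos less_imp_le)

lemma eta_prev_le_1: "eta_prev xmax Wx Wh U b l k \<le> 1"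
proof (cases k)
  case (Suc k')
  have "tanh (cell_bound (layer_gates l k')) \<le> 1" "sigm (layer_gates l k' GO) \<le> 1"
    using tanh_real_lt_1 sigm_less_1 less_imp_le by blast+
  then show ?thesis
    by (simp add: Suc eta_prev_Suc hidden_bound_def mult_le_one sigm_pos less_imp_le
        cell_bound_nonneg layer_gates_nonneg)
qed simp

context
  assumes xmax_nonneg: "0 \<le> xmax"
begin

lemma eta_prev_antimono: "eta_prev xmax Wx Wh U b l (Suc k) \<le> eta_prev xmax Wx Wh U b l k"
proof (induction k)
  case 0
  show ?case
    using eta_prev_le_1 by simp
next
  case (Suc k)
  have "layer_gates l (Suc k) g \<le> layer_gates l k g" for g
    unfolding layer_gates_def using Suc.IH eta_prev_nonneg by (intro Gfun_mono xmax_nonneg)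
  then show ?case
    unfolding eta_prev_Suc by (intro hidden_bound_mono layer_gates_nonneg)
qed

lemma layer_gates_antimono: "layer_gates l (Suc k) g \<le> layer_gates l k g"
  unfolding layer_gates_def using eta_prev_antimono eta_prev_nonneg by (intro Gfun_mono xmax_nonneg)

lemma A_s_nonneg: "\<forall>i j. 0 \<le> A_s xmax Wx Wh U b l k $ i $ j"
  by (simp add: forall_2 A_s_entries sigm_pos less_imp_le cell_gain_nonneg hidden_gain_nonneg
      layer_gates_nonneg)

lemma A_s_antimono: "\<forall>i j. A_s xmax Wx Wh U b l (Suc k) $ i $ j \<le> A_s xmax Wx Wh U b l k $ i $ j"
  using layer_gates_nonneg layer_gates_antimono sigm_pos
  by (auto simp: forall_2 A_s_entries intro!: sigm_mono mult_mono cell_gain_mono hidden_gain_mono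
      intro: less_imp_le)

lemma spectral_radius2_A_s_antimono:
  "spectral_radius2 (A_s xmax Wx Wh U b l (Suc k)) \<le> spectral_radius2 (A_s xmax Wx Wh U b l k)"
  by (intro spectral_radius2_mono A_s_nonneg A_s_antimono)

lemma Sset_hidden_le:
  assumes "s \<in> S l k"
  shows "\<bar>snd s $ j\<bar> \<le> eta_prev xmax Wx Wh U b l k" and "\<bar>snd s $ j\<bar> \<le> 1"
proof -
  have "\<bar>snd s $ j\<bar> \<le> eta_prev xmax Wx Wh U b l (Suc k)"
    using assms by (auto simp: Sset_eq cell_box_def eta_prev_Suc vinf_le_iff)
  then show "\<bar>snd s $ j\<bar> \<le> eta_prev xmax Wx Wh U b l k"
    using eta_prev_antimono order_trans by blast
  then show "\<bar>snd s $ j\<bar> \<le> 1"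
    using eta_prev_le_1 order_trans by blast
qed

lemma Sset_cell_le: "s \<in> S l k \<Longrightarrow> vinf (fst s) \<le> cell_bound (layer_gates l k)"
  by (auto simp: Sset_eq cell_box_def)

lemma preact_bounded_first_layer:
  assumes "\<And>j. \<bar>x $ j\<bar> \<le> xmax" and "s \<in> S 1 k"
  shows "preact_bounded (layer_gates 1 k) (preact (\<lambda>g. Wx g *v x) (U 1) (b 1) (snd s))"
  unfolding layer_gates_first_layer
  by (rule preact_bounded_gate_bound[OF assms(1) Sset_hidden_le(1)[OF assms(2)]])

lemma preact_bounded_upper_layer:
  assumes "l \<noteq> 1" and "\<And>j. \<bar>x $ j\<bar> \<le> 1" and "s \<in> S l k"
  shows "preact_bounded (layer_gates l k) (preact (\<lambda>g. Wh l g *v x) (U l) (b l) (snd s))"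
  unfolding layer_gates_upper_layer[OF assms(1)]
  by (rule preact_bounded_gate_bound[OF assms(2) Sset_hidden_le(1)[OF assms(3)]])

lemma cell_step_in_Sset:
  "preact_bounded (layer_gates l k) (preact wx (U l) (b l) (snd s)) \<Longrightarrow> s \<in> S l k
    \<Longrightarrow> cell_step wx (U l) (b l) s \<in> S l k"
  unfolding Sset_eq by (intro cell_step_in_cell_box) (simp_all add: Sset_cell_le[unfolded Sset_eq])

lemma lstm_traj_in_Sset:
  assumes s0: "\<forall>l\<in>{1..L}. s0 l \<in> S l k"
    and x: "\<forall>\<tau><t. \<forall>i. \<bar>x \<tau> $ i\<bar> \<le> xmax"
  shows "\<forall>l\<in>{1..L}. traj x s0 t l \<in> S l k"
  using x
proof (induction t)
  case 0
  then show ?case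
    using s0 by simp
next
  case (Suc t)
  then have prev: "\<forall>l\<in>{1..L}. traj x s0 t l \<in> S l k" and xt: "\<And>i. \<bar>x t $ i\<bar> \<le> xmax"
    by simp_all
  have "traj x s0 (Suc t) l \<in> S l k" if "1 \<le> l" "l \<le> L" for l
    using that
  proof (induction l rule: nat_induct_at_least)
    case base
    then show ?case
      using prev preact_bounded_first_layer[OF xt] cell_step_in_Sset
      by (simp only: lstm_traj_first_layer) auto
  next
    case (Suc l)
    then show ?case
      using prev Sset_hidden_le(2) preact_bounded_upper_layer cell_step_in_Sset
      by (simp add: lstm_traj_upper_layer)
  qed
  then show ?case
    by simp
qed

lemma Sset_cell_step_diff:
  fixes W :: "gate \<Rightarrow> real^'n^'c" and x1 x2 :: "real^'n" and s1 s2 :: "(real^'c) \<times> (real^'c)"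
    and l k :: nat
  defines "s1' \<equiv> cell_step (\<lambda>g. W g *v x1) (U l) (b l) s1"
    and "s2' \<equiv> cell_step (\<lambda>g. W g *v x2) (U l) (b l) s2"
    and "A \<equiv> A_s xmax Wx Wh U b l k"
  assumes "preact_bounded (layer_gates l k) (preact (\<lambda>g. W g *v x1) (U l) (b l) (snd s1))"
    and "preact_bounded (layer_gates l k) (preact (\<lambda>g. W g *v x2) (U l) (b l) (snd s2))"
    and "s2 \<in> S l k"
  shows "norm (fst s1' - fst s2') \<le> A$1$1 * norm (fst s1 - fst s2) + A$1$2 * norm (snd s1 - snd s2)
      + cell_gain (layer_gates l k) W * norm (x1 - x2)"
    and "norm (snd s1' - snd s2') \<le> A$2$1 * norm (fst s1 - fst s2) + A$2$2 * norm (snd s1 - snd s2)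
      + hidden_gain (layer_gates l k) W * norm (x1 - x2)"
  using cell_step_diff[OF assms(4,5) Sset_cell_le[OF assms(6)]]
  by (simp_all add: s1'_def s2'_def A_def A_s_entries)

definition input_cell_gain :: "nat \<Rightarrow> nat \<Rightarrow> real" where
  "input_cell_gain l k =
    (if l = 1 then cell_gain (layer_gates l k) Wx else cell_gain (layer_gates l k) (Wh l))"

definition input_hidden_gain :: "nat \<Rightarrow> nat \<Rightarrow> real" where
  "input_hidden_gain l k =
    (if l = 1 then hidden_gain (layer_gates l k) Wx else hidden_gain (layer_gates l k) (Wh l))"

lemma lstm_traj_step_diff:
  assumes s1: "\<forall>l\<in>{1..L}. s1 l \<in> S l k" and s2: "\<forall>l\<in>{1..L}. s2 l \<in> S l k"
    and x1: "\<forall>\<tau>\<le>t. \<forall>i. \<bar>x1 \<tau> $ i\<bar> \<le> xmax"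
    and x2: "\<forall>\<tau>\<le>t. \<forall>i. \<bar>x2 \<tau> $ i\<bar> \<le> xmax"
    and l: "l \<in> {1..L}"
  defines "dc \<equiv> \<lambda>\<tau>. norm (fst (traj x1 s1 \<tau> l) - fst (traj x2 s2 \<tau> l))"
    and "dh \<equiv> \<lambda>\<tau>. norm (snd (traj x1 s1 \<tau> l) - snd (traj x2 s2 \<tau> l))"
    and "u \<equiv> if l = 1 then norm (x1 t - x2 t)
      else norm (snd (traj x1 s1 (Suc t) (l - 1)) - snd (traj x2 s2 (Suc t) (l - 1)))"
    and "A \<equiv> A_s xmax Wx Wh U b l k"
  shows "dc (Suc t) \<le> A$1$1 * dc t + A$1$2 * dh t + input_cell_gain l k * u"
    and "dh (Suc t) \<le> A$2$1 * dc t + A$2$2 * dh t + input_hidden_gain l k * u"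
proof -
  have "\<forall>l\<in>{1..L}. traj x1 s1 \<tau> l \<in> S l k \<and> traj x2 s2 \<tau> l \<in> S l k"
    if "\<tau> \<le> Suc t" for \<tau>
    using lstm_traj_in_Sset[OF s1, of \<tau> x1] lstm_traj_in_Sset[OF s2, of \<tau> x2] x1 x2 that by auto
  then have current: "traj x1 s1 t l \<in> S l k" "traj x2 s2 t l \<in> S l k"
    and following: "l' \<in> {1..L} \<Longrightarrow>
      traj x1 s1 (Suc t) l' \<in> S l' k \<and> traj x2 s2 (Suc t) l' \<in> S l' k" for l'
    using l by auto
  have "dc (Suc t) \<le> A$1$1 * dc t + A$1$2 * dh t + input_cell_gain l k * u
    \<and> dh (Suc t) \<le> A$2$1 * dc t + A$2$2 * dh t + input_hidden_gain l k * u"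
  proof (cases "l = 1")
    case True
    have "preact_bounded (layer_gates 1 k) (preact (\<lambda>g. Wx g *v x1 t) (U 1) (b 1) (snd (traj x1 s1 t 1)))"
      and "preact_bounded (layer_gates 1 k) (preact (\<lambda>g. Wx g *v x2 t) (U 1) (b 1) (snd (traj x2 s2 t 1)))"
      by (rule preact_bounded_first_layer; use current x1 x2 True in simp)+
    from Sset_cell_step_diff[OF this] show ?thesis
      using current True
      by (simp add: lstm_traj_first_layer dc_def dh_def u_def A_def input_cell_gain_def
          input_hidden_gain_def)
  next
    case False
    then have "2 \<le> l" "l - 1 \<in> {1..L}"
      using l by auto
    then have h_le: "\<bar>snd (traj x1 s1 (Suc t) (l - 1)) $ j\<bar> \<le> 1"
      "\<bar>snd (traj x2 s2 (Suc t) (l - 1)) $ j\<bar> \<le> 1" for j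
      using following Sset_hidden_le(2) by blast+
    have "preact_bounded (layer_gates l k)
        (preact (\<lambda>g. Wh l g *v snd (traj x1 s1 (Suc t) (l - 1))) (U l) (b l) (snd (traj x1 s1 t l)))"
      and "preact_bounded (layer_gates l k)
        (preact (\<lambda>g. Wh l g *v snd (traj x2 s2 (Suc t) (l - 1))) (U l) (b l) (snd (traj x2 s2 t l)))"
      by (rule preact_bounded_upper_layer; use current False h_le in simp)+
    from Sset_cell_step_diff[OF this] show ?thesis
      using current False \<open>2 \<le> l\<close>
      by (simp add: lstm_traj_upper_layer dc_def dh_def u_def A_def input_cell_gain_def
          input_hidden_gain_def)
  qed
  then show "dc (Suc t) \<le> A$1$1 * dc t + A$1$2 * dh t + input_cell_gain l k * u"
    and "dh (Suc t) \<le> A$2$1 * dc t + A$2$2 * dh t + input_hidden_gain l k * u"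
    by simp_all
qed

definition contractive_weights ::
  "nat \<Rightarrow> nat \<Rightarrow> (nat \<Rightarrow> real) \<Rightarrow> (nat \<Rightarrow> real) \<Rightarrow> real \<Rightarrow> real \<Rightarrow> bool" where
  "contractive_weights L k p1 p2 lam K \<longleftrightarrow> (\<forall>l\<in>{1..L}. 1 \<le> p1 l \<and> 1 \<le> p2 l
    \<and> p1 l * A_s xmax Wx Wh U b l k $ 1 $ 1 + p2 l * A_s xmax Wx Wh U b l k $ 2 $ 1 \<le> lam * p1 l
    \<and> p1 l * A_s xmax Wx Wh U b l k $ 1 $ 2 + p2 l * A_s xmax Wx Wh U b l k $ 2 $ 2 \<le> lam * p2 l
    \<and> p1 l * input_cell_gain l k + p2 l * input_hidden_gain l k \<le> K)"

lemma contractive_weights_exist: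
  assumes "\<forall>l\<in>{1..L}. spectral_radius2 (A_s xmax Wx Wh U b l k) < 1"
  obtains p1 p2 lam K where "contractive_weights L k p1 p2 lam K" "0 \<le> lam" "lam < 1" "0 \<le> K"
proof -
  let ?A = "\<lambda>l. A_s xmax Wx Wh U b l k"
  have "\<forall>l\<in>{1..L}. \<exists>p1 p2 lam. 1 \<le> p1 \<and> 1 \<le> p2 \<and> lam < 1
      \<and> p1 * ?A l$1$1 + p2 * ?A l$2$1 \<le> lam * p1 \<and> p1 * ?A l$1$2 + p2 * ?A l$2$2 \<le> lam * p2"
    using spectral_radius2_lt_1_imp_contractive_weights[OF A_s_nonneg] assms by metis
  then obtain p1 p2 lam where w: "\<And>l. l \<in> {1..L} \<Longrightarrow> 1 \<le> p1 l \<and> 1 \<le> p2 l \<and> lam l < 1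
      \<and> p1 l * ?A l$1$1 + p2 l * ?A l$2$1 \<le> lam l * p1 l
      \<and> p1 l * ?A l$1$2 + p2 l * ?A l$2$2 \<le> lam l * p2 l"
    by metis
  define lamM where "lamM = Max (insert 0 (lam ` {1..L}))"
  define K where "K = Max (insert 0 ((\<lambda>l. p1 l * input_cell_gain l k + p2 l * input_hidden_gain l k) ` {1..L}))"
  have "contractive_weights L k p1 p2 lamM K"
    unfolding contractive_weights_def
  proof
    fix l
    assume l: "l \<in> {1..L}"
    have "lam l * p \<le> lamM * p" if "0 \<le> p" for p
      unfolding lamM_def using l that by (intro mult_right_mono Max_ge) simp_all
    then have "lam l * p1 l \<le> lamM * p1 l" "lam l * p2 l \<le> lamM * p2 l"
      using w[OF l] by simp_all
    moreover have "p1 l * input_cell_gain l k + p2 l * input_hidden_gain l k \<le> K"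
      unfolding K_def using l by (intro Max_ge) simp_all
    ultimately show "1 \<le> p1 l \<and> 1 \<le> p2 l \<and> p1 l * ?A l$1$1 + p2 l * ?A l$2$1 \<le> lamM * p1 l
      \<and> p1 l * ?A l$1$2 + p2 l * ?A l$2$2 \<le> lamM * p2 l
      \<and> p1 l * input_cell_gain l k + p2 l * input_hidden_gain l k \<le> K"
      using w[OF l] by linarith
  qed
  moreover have "0 \<le> lamM" "lamM < 1" "0 \<le> K"
    using w by (simp_all add: lamM_def K_def)
  ultimately show thesis
    by (rule that)
qed

lemma lstm_lyapunov_step:
  assumes w: "contractive_weights L k p1 p2 lam K" and "0 \<le> K"
    and s1: "\<forall>l\<in>{1..L}. s1 l \<in> S l k" and s2: "\<forall>l\<in>{1..L}. s2 l \<in> S l k"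
    and x1: "\<forall>\<tau>\<le>t. \<forall>i. \<bar>x1 \<tau> $ i\<bar> \<le> xmax"
    and x2: "\<forall>\<tau>\<le>t. \<forall>i. \<bar>x2 \<tau> $ i\<bar> \<le> xmax"
    and l: "l \<in> {1..L}"
  defines "V \<equiv> \<lambda>l \<tau>. p1 l * norm (fst (traj x1 s1 \<tau> l) - fst (traj x2 s2 \<tau> l))
      + p2 l * norm (snd (traj x1 s1 \<tau> l) - snd (traj x2 s2 \<tau> l))"
  shows "V l (Suc t) \<le> lam * V l t + K * (if l = 1 then norm (x1 t - x2 t) else V (l - 1) (Suc t))"
proof -
  define u where "u = (if l = 1 then norm (x1 t - x2 t)
    else norm (snd (traj x1 s1 (Suc t) (l - 1)) - snd (traj x2 s2 (Suc t) (l - 1))))"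
  have wl: "1 \<le> p1 l" "1 \<le> p2 l" "p1 l * input_cell_gain l k + p2 l * input_hidden_gain l k \<le> K"
    using w l by (simp_all add: contractive_weights_def)
  then have "0 \<le> p1 l" "0 \<le> p2 l"
    by simp_all
  have "V l (Suc t) \<le> lam * V l t + (p1 l * input_cell_gain l k + p2 l * input_hidden_gain l k) * u"
    unfolding V_def u_def
    by (rule weighted_sum_step_le[OF lstm_traj_step_diff[OF s1 s2 x1 x2 l]])
       (use w l \<open>0 \<le> p1 l\<close> \<open>0 \<le> p2 l\<close> in \<open>simp_all add: contractive_weights_def\<close>)
  also have "\<dots> \<le> lam * V l t + K * (if l = 1 then norm (x1 t - x2 t) else V (l - 1) (Suc t))"
  proof (intro add_left_mono mult_mono wl(3) \<open>0 \<le> K\<close>)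
    show "0 \<le> u"
      by (simp add: u_def)
    show "u \<le> (if l = 1 then norm (x1 t - x2 t) else V (l - 1) (Suc t))"
    proof (cases "l = 1")
      case False
      then have "l - 1 \<in> {1..L}"
        using l by auto
      then have "1 \<le> p1 (l - 1)" "1 \<le> p2 (l - 1)"
        using w by (simp_all add: contractive_weights_def)
      then show ?thesis
        using False mult_right_mono[of 1 "p2 (l - 1)"] by (simp add: u_def V_def add_increasing)
    qed (simp add: u_def)
  qed
  finally show ?thesis .
qed

lemma lstm_incremental_iss:
  assumes "\<forall>l\<in>{1..L}. spectral_radius2 (A_s xmax Wx Wh U b l k) < 1"
  shows "\<exists>\<beta> \<gamma>. class_KL \<beta> \<and> class_Kinf \<gamma> \<and>
    (\<forall>s1 s2 :: nat \<Rightarrow> (real^'c) \<times> (real^'c). \<forall>x1 x2 :: nat \<Rightarrow> real^'x. \<forall>t.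
       (\<forall>l\<in>{1..L}. s1 l \<in> S l k \<and> s2 l \<in> S l k)
       \<and> (\<forall>\<tau>\<le>t. \<forall>i. \<bar>x1 \<tau> $ i\<bar> \<le> xmax \<and> \<bar>x2 \<tau> $ i\<bar> \<le> xmax)
       \<longrightarrow> state_dist L (traj x1 s1 t) (traj x2 s2 t) \<le> \<beta> (state_dist L s1 s2) t + \<gamma> (input_dist t x1 x2))"
proof -
  obtain p1 p2 lam K where w: "contractive_weights L k p1 p2 lam K" and "lam < 1" "0 \<le> K"
    using contractive_weights_exist[OF assms] by blast
  obtain mu C1 C2 where "0 < mu" "mu < 1" "0 < C1" "0 < C2" and cascade:
    "\<And>V d M t. (\<And>l s. l \<in> {1..L} \<Longrightarrow> 0 \<le> V l s) \<Longrightarrow> (\<And>s. 0 \<le> d s) \<Longrightarrow> 0 \<le> M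
      \<Longrightarrow> (\<And>s. s < t \<Longrightarrow> d s \<le> M)
      \<Longrightarrow> (\<And>l s. l \<in> {1..L} \<Longrightarrow> s < t
            \<Longrightarrow> V l (Suc s) \<le> lam * V l s + K * (if l = 1 then d s else V (l - 1) (Suc s)))
      \<Longrightarrow> (\<Sum>l=1..L. V l t) \<le> C1 * mu^t * (\<Sum>l=1..L. V l 0) + C2 * M"
    by (rule cascade_input_to_state_bound[where L = L, OF \<open>lam < 1\<close> \<open>0 \<le> K\<close>]) blast
  define P where "P = Max (insert 1 ((\<lambda>l. p1 l + p2 l) ` {1..L}))"
  have "1 \<le> P"
    by (simp add: P_def)
  define \<beta> where "\<beta> s t = C1 * (2 * real L * P + 1) * mu^t * s" for s t
  define \<gamma> where "\<gamma> r = C2 * r" for r :: real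
  show ?thesis
  proof (intro exI[of _ \<beta>] exI[of _ \<gamma>] conjI allI impI)
    show "class_KL \<beta>"
      unfolding \<beta>_def using \<open>0 < C1\<close> \<open>1 \<le> P\<close> \<open>0 < mu\<close> \<open>mu < 1\<close>
      by (intro class_KL_exponential mult_pos_pos add_nonneg_pos) auto
    show "class_Kinf \<gamma>"
      unfolding \<gamma>_def using \<open>0 < C2\<close> by (rule class_Kinf_linear)
    fix s1 s2 :: "nat \<Rightarrow> (real^'c) \<times> (real^'c)" and x1 x2 :: "nat \<Rightarrow> real^'x" and t :: nat
    assume "(\<forall>l\<in>{1..L}. s1 l \<in> S l k \<and> s2 l \<in> S l k)
      \<and> (\<forall>\<tau>\<le>t. \<forall>i. \<bar>x1 \<tau> $ i\<bar> \<le> xmax \<and> \<bar>x2 \<tau> $ i\<bar> \<le> xmax)"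
    then have s: "\<forall>l\<in>{1..L}. s1 l \<in> S l k" "\<forall>l\<in>{1..L}. s2 l \<in> S l k"
      and x: "\<forall>\<tau>\<le>t. \<forall>i. \<bar>x1 \<tau> $ i\<bar> \<le> xmax \<and> \<bar>x2 \<tau> $ i\<bar> \<le> xmax"
      by auto
    define V where "V l \<tau> = p1 l * norm (fst (traj x1 s1 \<tau> l) - fst (traj x2 s2 \<tau> l))
      + p2 l * norm (snd (traj x1 s1 \<tau> l) - snd (traj x2 s2 \<tau> l))" for l \<tau>
    define M where "M = input_dist t x1 x2"
    have p: "1 \<le> p1 l \<and> 1 \<le> p2 l" "0 \<le> p1 l \<and> 0 \<le> p2 l \<and> p1 l \<le> P \<and> p2 l \<le> P"
      if "l \<in> {1..L}" for l
    proof -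
      show "1 \<le> p1 l \<and> 1 \<le> p2 l"
        using w that by (simp add: contractive_weights_def)
      have "p1 l + p2 l \<le> P"
        unfolding P_def using that by (intro Max_ge) simp_all
      then show "0 \<le> p1 l \<and> 0 \<le> p2 l \<and> p1 l \<le> P \<and> p2 l \<le> P"
        using \<open>1 \<le> p1 l \<and> 1 \<le> p2 l\<close> by simp
    qed
    have "state_dist L (traj x1 s1 t) (traj x2 s2 t) \<le> (\<Sum>l=1..L. V l t)"
      unfolding V_def using p(1) by (rule state_dist_le_weighted_sum)
    also have "\<dots> \<le> C1 * mu^t * (\<Sum>l=1..L. V l 0) + C2 * M"
    proof (rule cascade[where d = "\<lambda>\<tau>. norm (x1 \<tau> - x2 \<tau>)"])
      show "0 \<le> V l \<tau>" if "l \<in> {1..L}" for l \<tau>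
        using p(1)[OF that] by (simp add: V_def)
      show "V l (Suc \<sigma>)
          \<le> lam * V l \<sigma> + K * (if l = 1 then norm (x1 \<sigma> - x2 \<sigma>) else V (l - 1) (Suc \<sigma>))"
        if "l \<in> {1..L}" "\<sigma> < t" for l \<sigma>
        unfolding V_def by (rule lstm_lyapunov_step[OF w \<open>0 \<le> K\<close> s]) (use x that in auto)
      show "norm (x1 \<sigma> - x2 \<sigma>) \<le> M" if "\<sigma> < t" for \<sigma>
        using that by (auto simp: M_def input_dist_def intro!: Max_ge)
      show "0 \<le> M"
        unfolding M_def input_dist_def by (rule order_trans[OF norm_ge_zero Max_ge]) auto
    qed simp
    also have "\<dots> \<le> C1 * mu^t * (2 * real L * P * state_dist L s1 s2) + C2 * M"
    proof (intro add_right_mono mult_left_mono)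
      show "(\<Sum>l=1..L. V l 0) \<le> 2 * real L * P * state_dist L s1 s2"
        unfolding V_def lstm_traj.simps(1) using p(2) by (rule weighted_sum_le_state_dist)
    qed (use \<open>0 < C1\<close> \<open>0 < mu\<close> in simp)
    also have "\<dots> \<le> \<beta> (state_dist L s1 s2) t + \<gamma> (input_dist t x1 x2)"
      using \<open>0 < C1\<close> \<open>0 < mu\<close>
      by (simp add: \<beta>_def \<gamma>_def M_def algebra_simps state_dist_def sum_nonneg)
    finally show "state_dist L (traj x1 s1 t) (traj x2 s2 t)
      \<le> \<beta> (state_dist L s1 s2) t + \<gamma> (input_dist t x1 x2)" .
  qed
qed

end

end

theorem theorem4p2:
  fixes L :: nat and xmax :: real
    and Wx :: "gate \<Rightarrow> real^'x^'c" and Wh :: "nat \<Rightarrow> gate \<Rightarrow> real^'c^'c"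
    and U :: "nat \<Rightarrow> gate \<Rightarrow> real^'c^'c" and b :: "nat \<Rightarrow> gate \<Rightarrow> real^'c"
    and k :: nat
  assumes xmax_pos: "xmax > 0"
  shows "((\<forall>l\<in>{1..L}. spectral_radius2 (A_s xmax Wx Wh U b l k) < 1) \<longrightarrow>
           (\<exists>\<beta> \<gamma>. class_KL \<beta> \<and> class_Kinf \<gamma> \<and>
              (\<forall>s1 s2 :: nat \<Rightarrow> (real^'c) \<times> (real^'c). \<forall>x1 x2 :: nat \<Rightarrow> real^'x. \<forall>t.
                 (\<forall>l\<in>{1..L}. s1 l \<in> Sset xmax Wx Wh U b l k \<and> s2 l \<in> Sset xmax Wx Wh U b l k)
                 \<and> (\<forall>\<tau>\<le>t. \<forall>i. \<bar>x1 \<tau> $ i\<bar> \<le> xmax \<and> \<bar>x2 \<tau> $ i\<bar> \<le> xmax)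
                 \<longrightarrow> state_dist L (lstm_traj Wx Wh U b x1 s1 t) (lstm_traj Wx Wh U b x2 s2 t)
                     \<le> \<beta> (state_dist L s1 s2) t + \<gamma> (input_dist t x1 x2))))
         \<and> (\<forall>k'. \<forall>l\<in>{1..L}.
              spectral_radius2 (A_s xmax Wx Wh U b l (Suc k'))
                \<le> spectral_radius2 (A_s xmax Wx Wh U b l k'))"
proof -
  have "0 \<le> xmax"
    using xmax_pos by simp
  then show ?thesis
    by (intro conjI impI allI ballI lstm_incremental_iss spectral_radius2_A_s_antimono) auto
qed

end
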